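(* Let $\alpha:[a,b]\to S^2$ be smooth and $f:[a,b]\to\mathbb{R}_+$ be smooth and positive, and suppose the integral curve $\beta(t)=\int_a^t f(s)\alpha(s)\,ds$ is a round $\epsilon$-suspension. Then for every $k\in[\tfrac12,\tfrac32]$ there is a positive function $g:[a,b]\to\mathbb{R}_+$ such that (i) $g(t)=f(t)$ for $t$ near $a$ and near $b$, and (ii) the integral curve $\gamma(t)=\int_a^t g(s)\alpha(s)\,ds$ is a $(k\epsilon)$-suspension with $\gamma(b)-\gamma(a)=k(\beta(b)-\beta(a))$.
   Context: $S^2$ is the unit sphere in $\mathbb{R}^3$, $\mathbb{R}_+=\{x>0\}$. A smooth arc $\beta:[a,b]\to\mathbb{R}^3$ is an $\epsilon$-suspension if it is an embedding into an isosceles triangle $\Delta$ whose base is the segment from $\beta(a)$ to $\beta(b)$ and whose height is $\epsilon$. It is a round $\epsilon$-suspension if moreover its image is a subarc of a round circle and $\|\beta'(t)\|$ is constant. *)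

theory Defs
  imports "HOL-Analysis.Analysis"
begin

(* C^infinity on a set S (one-sided derivatives at endpoints of an interval):
   there is a sequence of successive derivatives D 0 = f, D (n+1) = (D n)'. *)
definition smooth_on :: "real set \<Rightarrow> (real \<Rightarrow> 'a::real_normed_vector) \<Rightarrow> bool" where
  "smooth_on S f \<longleftrightarrow> (\<exists>D. D 0 = f \<and>
      (\<forall>n. \<forall>t\<in>S. (D n has_vector_derivative D (Suc n) t) (at t within S)))"

definition isosceles_triangle :: "real^3 \<Rightarrow> real^3 \<Rightarrow> real \<Rightarrow> (real^3) set \<Rightarrow> bool" where
  "isosceles_triangle p q h T \<longleftrightarrow> (\<exists>x. (x - midpoint p q) \<bullet> (q - p) = 0 \<and>
      norm (x - midpoint p q) = h \<and> T = convex hull {p, q, x})"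

definition suspension :: "real \<Rightarrow> real \<Rightarrow> real \<Rightarrow> (real \<Rightarrow> real^3) \<Rightarrow> bool" where
  "suspension eps a b \<beta> \<longleftrightarrow> smooth_on {a..b} \<beta> \<and> inj_on \<beta> {a..b} \<and>
      (\<exists>T. isosceles_triangle (\<beta> a) (\<beta> b) eps T \<and> \<beta> ` {a..b} \<subseteq> T)"

definition round_circle :: "(real^3) set \<Rightarrow> bool" where
  "round_circle C \<longleftrightarrow> (\<exists>c r n. r > 0 \<and> n \<noteq> 0 \<and>
      C = {x. dist x c = r \<and> (x - c) \<bullet> n = 0})"

definition round_suspension :: "real \<Rightarrow> real \<Rightarrow> real \<Rightarrow> (real \<Rightarrow> real^3) \<Rightarrow> bool" where
  "round_suspension eps a b \<beta> \<longleftrightarrow> suspension eps a b \<beta> \<and>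
      (\<exists>C. round_circle C \<and> \<beta> ` {a..b} \<subseteq> C) \<and>
      (\<exists>c. \<forall>t\<in>{a..b}. \<exists>v. (\<beta> has_vector_derivative v) (at t within {a..b}) \<and> norm v = c)"

end

theory Submission
  imports Defs
begin

text \<open>A round suspension has constant speed \<open>f = c\<close>, so its direction \<open>\<alpha>\<close> turns uniformly
  and the curve is an arc of angle \<open>2 T\<close> of a circle of radius \<open>r\<close>. For the arc to fit into the
  triangle of height \<open>\<epsilon>\<close>, the base angle of the triangle must be at least the angle \<open>T\<close>
  between chord and arc at the endpoints: \<open>r sin\<^sup>2 T \<le> \<epsilon> cos T\<close>, so in particular \<open>T < \<pi>/2\<close>.

  The new speed is \<open>g = c (1 + l \<rho>)\<close> with \<open>\<rho>\<close> a smooth plateau that is symmetric about the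
  midpoint and vanishes near the endpoints, and \<open>l\<close> chosen so that the chord is multiplied by
  \<open>k\<close>. The directions \<open>\<alpha>\<close> still make angles in \<open>[-T, T]\<close> with the chord, so the new curve
  stays inside the two cones of angle \<open>T\<close> over its endpoints, and the symmetry of \<open>g\<close> makes it
  end on the chord. The chord length grows by \<open>k\<close>, and so does the height bound
  \<open>(chord/2) tan T \<le> \<epsilon>\<close>.\<close>

section \<open>Smooth functions\<close>

lemmas has_vector_derivative_scaleR_right =
  bounded_linear.has_vector_derivative[OF bounded_linear_scaleR_right]

lemmas has_vector_derivative_inner =
  bounded_bilinear.has_vector_derivative[OF bounded_bilinear_inner]

lemma smooth_on_subset:
  assumes "smooth_on S f" "T \<subseteq> S"
  shows "smooth_on T f"
proof -
  obtain D where "D 0 = f" "\<forall>n. \<forall>t\<in>S. (D n has_vector_derivative D (Suc n) t) (at t within S)"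
    using assms(1) unfolding smooth_on_def by blast
  then show ?thesis
    unfolding smooth_on_def using assms(2)
    by (intro exI[of _ D]) (auto intro: has_vector_derivative_within_subset)
qed

lemma smooth_on_has_vector_derivativeE:
  assumes "smooth_on S f"
  obtains f' where "\<And>t. t \<in> S \<Longrightarrow> (f has_vector_derivative f' t) (at t within S)" "smooth_on S f'"
proof -
  obtain D where D: "D 0 = f" "\<forall>n. \<forall>t\<in>S. (D n has_vector_derivative D (Suc n) t) (at t within S)"
    using assms unfolding smooth_on_def by blast
  have "smooth_on S (D 1)"
    unfolding smooth_on_def using D by (intro exI[of _ "\<lambda>n. D (Suc n)"]) auto
  with D show ?thesis using that[of "D 1"] by auto
qed

lemma smooth_on_has_vector_derivativeI:
  assumes "\<And>t. t \<in> S \<Longrightarrow> (f has_vector_derivative f' t) (at t within S)" "smooth_on S f'"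
  shows "smooth_on S f"
proof -
  obtain D where D: "D 0 = f'" "\<forall>n. \<forall>t\<in>S. (D n has_vector_derivative D (Suc n) t) (at t within S)"
    using assms(2) unfolding smooth_on_def by blast
  define D' where "D' n = (case n of 0 \<Rightarrow> f | Suc m \<Rightarrow> D m)" for n
  have "(D' n has_vector_derivative D' (Suc n) t) (at t within S)" if "t \<in> S" for n t
    using D assms(1) that by (cases n) (auto simp: D'_def)
  then show ?thesis
    unfolding smooth_on_def by (intro exI[of _ D']) (simp add: D'_def)
qed

lemma smooth_on_imp_continuous_on:
  assumes "smooth_on S f"
  shows "continuous_on S f"
  using continuous_on_vector_derivative by (rule smooth_on_has_vector_derivativeE[OF assms])

lemma smooth_on_coinduct:
  assumes "P f"
    and step: "\<And>F. P F \<Longrightarrow> \<exists>F'. (\<forall>t\<in>S. (F has_vector_derivative F' t) (at t within S)) \<and> P F'"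
  shows "smooth_on S f"
proof -
  define N where "N F = (SOME F'. (\<forall>t\<in>S. (F has_vector_derivative F' t) (at t within S)) \<and> P F')"
    for F
  have N: "(\<forall>t\<in>S. (F has_vector_derivative N F t) (at t within S)) \<and> P (N F)" if "P F" for F
    unfolding N_def using someI_ex[OF step[OF that]] .
  have P_iterate: "P ((N ^^ n) f)" for n
    by (induction n) (simp_all add: assms(1) N)
  show ?thesis
    unfolding smooth_on_def using N[OF P_iterate] by (intro exI[of _ "\<lambda>n. (N ^^ n) f"]) simp
qed

lemma smooth_on_const: "smooth_on S (\<lambda>t. c)"
  by (rule smooth_on_coinduct[where P="\<lambda>F. \<exists>c. F = (\<lambda>t. c)"])
    (auto intro!: exI[of _ "\<lambda>t. 0"] has_vector_derivative_const)

lemma smooth_on_add: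
  assumes "smooth_on S f" "smooth_on S g"
  shows "smooth_on S (\<lambda>t. f t + g t)"
proof -
  obtain D where D: "D 0 = f" "\<forall>n. \<forall>t\<in>S. (D n has_vector_derivative D (Suc n) t) (at t within S)"
    using assms(1) unfolding smooth_on_def by blast
  obtain E where E: "E 0 = g" "\<forall>n. \<forall>t\<in>S. (E n has_vector_derivative E (Suc n) t) (at t within S)"
    using assms(2) unfolding smooth_on_def by blast
  show ?thesis
    unfolding smooth_on_def using D E
    by (intro exI[of _ "\<lambda>n t. D n t + E n t"]) (auto intro!: has_vector_derivative_add)
qed

definition smooth_derivative :: "real set \<Rightarrow> (real \<Rightarrow> 'a::real_normed_vector) \<Rightarrow> real \<Rightarrow> 'a" where
  "smooth_derivative S f =
     (SOME f'. (\<forall>t\<in>S. (f has_vector_derivative f' t) (at t within S)) \<and> smooth_on S f')"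

lemma smooth_derivative:
  assumes "smooth_on S f"
  shows "\<And>t. t \<in> S \<Longrightarrow> (f has_vector_derivative smooth_derivative S f t) (at t within S)"
    and "smooth_on S (smooth_derivative S f)"
proof -
  obtain f' where "\<forall>t\<in>S. (f has_vector_derivative f' t) (at t within S)" "smooth_on S f'"
    by (rule smooth_on_has_vector_derivativeE[OF assms]) auto
  then have "\<exists>f'. (\<forall>t\<in>S. (f has_vector_derivative f' t) (at t within S)) \<and> smooth_on S f'"
    by blast
  from someI_ex[OF this]
  show "\<And>t. t \<in> S \<Longrightarrow> (f has_vector_derivative smooth_derivative S f t) (at t within S)"
    and "smooth_on S (smooth_derivative S f)"
    unfolding smooth_derivative_def by auto
qed

definition sum_scaleR_products :: "((real \<Rightarrow> real) \<times> (real \<Rightarrow> 'a::real_normed_vector)) list \<Rightarrow> real \<Rightarrow> 'a"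
  where "sum_scaleR_products ps t = (\<Sum>(f, g)\<leftarrow>ps. f t *\<^sub>R g t)"

definition derivative_products ::
    "real set \<Rightarrow> ((real \<Rightarrow> real) \<times> (real \<Rightarrow> 'a::real_normed_vector)) list \<Rightarrow>
     ((real \<Rightarrow> real) \<times> (real \<Rightarrow> 'a)) list"
  where "derivative_products S ps =
     concat (map (\<lambda>(f, g). [(smooth_derivative S f, g), (f, smooth_derivative S g)]) ps)"

lemma has_vector_derivative_sum_scaleR_products:
  assumes "\<forall>(f, g)\<in>set ps. smooth_on S f \<and> smooth_on S g" "t \<in> S"
  shows "(sum_scaleR_products ps has_vector_derivative
           sum_scaleR_products (derivative_products S ps) t) (at t within S)"
  using assms(1)
proof (induction ps)
  case Nil
  then show ?case
    by (simp add: sum_scaleR_products_def derivative_products_def has_vector_derivative_const)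
next
  case (Cons p ps)
  obtain f g where p: "p = (f, g)" by fastforce
  have "(f has_real_derivative smooth_derivative S f t) (at t within S)"
    using smooth_derivative(1)[of S f] Cons.prems p assms(2)
    by (simp add: has_real_derivative_iff_has_vector_derivative)
  moreover have "(g has_vector_derivative smooth_derivative S g t) (at t within S)"
    using smooth_derivative(1)[of S g] Cons.prems p assms(2) by simp
  ultimately have "((\<lambda>t. f t *\<^sub>R g t + sum_scaleR_products ps t) has_vector_derivative
      (f t *\<^sub>R smooth_derivative S g t + smooth_derivative S f t *\<^sub>R g t) +
      sum_scaleR_products (derivative_products S ps) t) (at t within S)"
    using Cons by (intro has_vector_derivative_add has_vector_derivative_scaleR) auto
  then show ?case
    by (simp add: p sum_scaleR_products_def derivative_products_def algebra_simps)
qed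

lemma smooth_on_sum_scaleR_products:
  assumes "\<forall>(f, g)\<in>set ps. smooth_on S f \<and> smooth_on S g"
  shows "smooth_on S (sum_scaleR_products ps)"
proof (rule smooth_on_coinduct
    [where P="\<lambda>F. \<exists>ps. F = sum_scaleR_products ps \<and> (\<forall>(f, g)\<in>set ps. smooth_on S f \<and> smooth_on S g)"])
  fix F :: "real \<Rightarrow> 'a"
  assume "\<exists>ps. F = sum_scaleR_products ps \<and> (\<forall>(f, g)\<in>set ps. smooth_on S f \<and> smooth_on S g)"
  then obtain ps where ps: "F = sum_scaleR_products ps" "\<forall>(f, g)\<in>set ps. smooth_on S f \<and> smooth_on S g"
    by blast
  moreover have "\<forall>(f, g)\<in>set (derivative_products S ps). smooth_on S f \<and> smooth_on S g"
    using ps(2) by (fastforce simp: derivative_products_def smooth_derivative(2))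
  ultimately show "\<exists>F'. (\<forall>t\<in>S. (F has_vector_derivative F' t) (at t within S)) \<and>
      (\<exists>ps. F' = sum_scaleR_products ps \<and> (\<forall>(f, g)\<in>set ps. smooth_on S f \<and> smooth_on S g))"
    using has_vector_derivative_sum_scaleR_products[OF ps(2)] by blast
next
  show "\<exists>ps'. sum_scaleR_products ps = sum_scaleR_products ps' \<and>
      (\<forall>(f, g)\<in>set ps'. smooth_on S f \<and> smooth_on S g)"
    using assms by blast
qed

lemma smooth_on_scaleR:
  fixes f :: "real \<Rightarrow> real" and g :: "real \<Rightarrow> 'a::real_normed_vector"
  assumes "smooth_on S f" "smooth_on S g"
  shows "smooth_on S (\<lambda>t. f t *\<^sub>R g t)"
proof -
  have "sum_scaleR_products [(f, g)] = (\<lambda>t. f t *\<^sub>R g t)"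
    by (simp add: sum_scaleR_products_def fun_eq_iff)
  then show ?thesis
    using smooth_on_sum_scaleR_products[of "[(f, g)]" S] assms by simp
qed

lemma smooth_on_compose_affine:
  assumes "smooth_on UNIV f"
  shows "smooth_on UNIV (\<lambda>t. f (m * t + q))"
proof -
  obtain D where D: "D 0 = f" "\<forall>n. \<forall>t\<in>UNIV. (D n has_vector_derivative D (Suc n) t) (at t)"
    using assms unfolding smooth_on_def by blast
  have "((\<lambda>t. m ^ n *\<^sub>R D n (m * t + q)) has_vector_derivative
      m ^ Suc n *\<^sub>R D (Suc n) (m * t + q)) (at t)" for n t
  proof -
    have affine: "((\<lambda>t. m * t + q) has_vector_derivative m) (at t)"
      by (auto intro!: derivative_eq_intros simp: has_real_derivative_iff_has_vector_derivative[symmetric])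
    have "((D n \<circ> (\<lambda>t. m * t + q)) has_vector_derivative m *\<^sub>R D (Suc n) (m * t + q)) (at t)"
      using D(2) by (intro vector_diff_chain_at[OF affine]) auto
    then have "((\<lambda>t. m ^ n *\<^sub>R (D n \<circ> (\<lambda>t. m * t + q)) t) has_vector_derivative
        m ^ n *\<^sub>R (m *\<^sub>R D (Suc n) (m * t + q))) (at t)"
      by (rule has_vector_derivative_scaleR_right)
    then show ?thesis by (simp add: o_def mult.commute)
  qed
  then show ?thesis
    unfolding smooth_on_def using D(1) by (intro exI[of _ "\<lambda>n t. m ^ n *\<^sub>R D n (m * t + q)"]) auto
qed

section \<open>Smooth bumps, steps and plateaus\<close>

definition flat_exp :: "real \<Rightarrow> real" where
  "flat_exp x = (if 0 < x then exp (- (1 / x)) else 0)"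

text \<open>On \<open>x > 0\<close> the \<open>n\<close>-th derivative of \<open>flat_exp\<close> is \<open>p\<^sub>n(1/x) exp(-1/x)\<close>,
  with \<open>p\<^sub>0 = 1\<close> and \<open>p\<^sub>n\<^sub>+\<^sub>1(y) = y\<^sup>2 (p\<^sub>n(y) - p\<^sub>n'(y))\<close>.\<close>

fun flat_exp_poly :: "nat \<Rightarrow> real poly" where
  "flat_exp_poly 0 = 1"
| "flat_exp_poly (Suc n) = [:0, 0, 1:] * (flat_exp_poly n - pderiv (flat_exp_poly n))"

definition flat_exp_deriv :: "nat \<Rightarrow> real \<Rightarrow> real" where
  "flat_exp_deriv n x = (if 0 < x then poly (flat_exp_poly n) (1 / x) * exp (- (1 / x)) else 0)"

lemma poly_divide_exp_tendsto_0: "((\<lambda>z::real. poly p z / exp z) \<longlongrightarrow> 0) at_top"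
proof -
  have "((\<lambda>z. \<Sum>i\<le>degree p. coeff p i * (z ^ i / exp z)) \<longlongrightarrow> (\<Sum>i\<le>degree p. coeff p i * 0)) at_top"
    using tendsto_power_div_exp_0 by (intro tendsto_sum tendsto_mult tendsto_const) auto
  moreover have "(\<lambda>z. \<Sum>i\<le>degree p. coeff p i * (z ^ i / exp z)) = (\<lambda>z. poly p z / exp z)"
    by (auto simp: poly_altdef sum_divide_distrib)
  ultimately show ?thesis by simp
qed

lemma has_real_derivative_poly_inverse_exp:
  assumes "0 < x"
  shows "((\<lambda>x. poly p (1 / x) * exp (- (1 / x))) has_real_derivative
          poly ([:0, 0, 1:] * (p - pderiv p)) (1 / x) * exp (- (1 / x))) (at x)"
proof -
  have inverse: "((\<lambda>x. 1 / x) has_real_derivative - 1 / x\<^sup>2) (at x)"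
    using assms by (auto intro!: derivative_eq_intros simp: power2_eq_square field_simps)
  have "((\<lambda>x. poly p (1 / x) * exp (- (1 / x))) has_real_derivative
      poly (pderiv p) (1 / x) * (- 1 / x\<^sup>2) * exp (- (1 / x)) +
      exp (- (1 / x)) * (- (- 1 / x\<^sup>2)) * poly p (1 / x)) (at x)"
    by (rule DERIV_mult[OF DERIV_chain2[OF poly_DERIV inverse]
        DERIV_chain2[OF DERIV_exp DERIV_minus[OF inverse]]])
  moreover have "poly (pderiv p) (1 / x) * (- 1 / x\<^sup>2) * exp (- (1 / x)) +
      exp (- (1 / x)) * (- (- 1 / x\<^sup>2)) * poly p (1 / x)
      = poly ([:0, 0, 1:] * (p - pderiv p)) (1 / x) * exp (- (1 / x))"
    by (simp add: algebra_simps power2_eq_square divide_simps)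
  ultimately show ?thesis by simp
qed

lemma has_real_derivative_flat_exp_deriv:
  "(flat_exp_deriv n has_real_derivative flat_exp_deriv (Suc n) x) (at x)"
proof (cases x "0 :: real" rule: linorder_cases)
  case greater
  have "((\<lambda>x. poly (flat_exp_poly n) (1 / x) * exp (- (1 / x))) has_real_derivative
      flat_exp_deriv (Suc n) x) (at x)"
    using has_real_derivative_poly_inverse_exp[OF greater] greater by (simp add: flat_exp_deriv_def)
  then show ?thesis
    by (rule has_field_derivative_transform_within_open[where S="{0<..}"])
      (use greater in \<open>auto simp: flat_exp_deriv_def\<close>)
next
  case less
  have "((\<lambda>x. 0) has_real_derivative flat_exp_deriv (Suc n) x) (at x)"
    using less by (simp add: flat_exp_deriv_def)
  then show ?thesis
    by (rule has_field_derivative_transform_within_open[where S="{..<0}"])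
      (use less in \<open>auto simp: flat_exp_deriv_def\<close>)
next
  case equal
  txt \<open>At \<open>0\<close> the difference quotient vanishes on the left, and on the right it is
    \<open>q(z)/exp z\<close> for \<open>z = 1/y \<rightarrow> \<infinity>\<close> and a polynomial \<open>q\<close>.\<close>
  have "((\<lambda>y. (flat_exp_deriv n y - flat_exp_deriv n 0) / (y - 0)) \<longlongrightarrow> 0) (at 0)"
  proof (rule filterlim_split_at_real)
    have "\<forall>\<^sub>F y in at_left 0. 0 = (flat_exp_deriv n y - flat_exp_deriv n 0) / (y - 0)"
      using eventually_at_left_real[of "-1" 0]
      by (auto elim!: eventually_mono simp: flat_exp_deriv_def)
    then show "((\<lambda>y. (flat_exp_deriv n y - flat_exp_deriv n 0) / (y - 0)) \<longlongrightarrow> 0) (at_left 0)"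
      by (rule Lim_transform_eventually[OF tendsto_const])
  next
    have "\<forall>\<^sub>F z in at_top. poly ([:0, 1:] * flat_exp_poly n) z / exp z =
        (flat_exp_deriv n (inverse z) - flat_exp_deriv n 0) / (inverse z - 0)"
      using eventually_gt_at_top[of 0]
      by eventually_elim (simp add: flat_exp_deriv_def exp_minus field_simps)
    then show "((\<lambda>y. (flat_exp_deriv n y - flat_exp_deriv n 0) / (y - 0)) \<longlongrightarrow> 0) (at_right 0)"
      unfolding filterlim_at_right_to_top
      by (rule Lim_transform_eventually[OF poly_divide_exp_tendsto_0])
  qed
  then show ?thesis
    using equal by (simp add: has_field_derivative_iff flat_exp_deriv_def)
qed

lemma smooth_on_flat_exp: "smooth_on S flat_exp"
proof -
  have "flat_exp_deriv 0 = flat_exp"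
    by (auto simp: flat_exp_deriv_def flat_exp_def fun_eq_iff)
  then have "smooth_on UNIV flat_exp"
    unfolding smooth_on_def using has_real_derivative_flat_exp_deriv
    by (intro exI[of _ flat_exp_deriv])
      (auto simp: has_real_derivative_iff_has_vector_derivative[symmetric])
  then show ?thesis
    by (rule smooth_on_subset) simp
qed

lemma flat_exp_pos: "0 < x \<Longrightarrow> 0 < flat_exp x"
  and flat_exp_eq_0: "x \<le> 0 \<Longrightarrow> flat_exp x = 0"
  and flat_exp_nonneg: "0 \<le> flat_exp x"
  by (auto simp: flat_exp_def)

definition bump :: "real \<Rightarrow> real \<Rightarrow> real \<Rightarrow> real" where
  "bump p q s = flat_exp (s - p) * flat_exp (q - s)"

lemma smooth_on_bump: "smooth_on S (bump p q)"
proof -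
  have "smooth_on UNIV (\<lambda>s. flat_exp (1 * s + - p) *\<^sub>R flat_exp ((- 1) * s + q))"
    by (intro smooth_on_scaleR smooth_on_compose_affine smooth_on_flat_exp)
  moreover have "(\<lambda>s. flat_exp (1 * s + - p) *\<^sub>R flat_exp ((- 1) * s + q)) = bump p q"
    by (simp add: bump_def fun_eq_iff)
  ultimately show ?thesis
    by (auto intro: smooth_on_subset)
qed

lemma continuous_on_bump: "continuous_on S (bump p q)"
  by (rule smooth_on_imp_continuous_on[OF smooth_on_bump])

lemma bump_nonneg: "0 \<le> bump p q s"
  by (simp add: bump_def flat_exp_nonneg)

lemma bump_eq_0: "s \<le> p \<or> q \<le> s \<Longrightarrow> bump p q s = 0"
  by (auto simp: bump_def flat_exp_eq_0)

lemma bump_pos: "p < s \<Longrightarrow> s < q \<Longrightarrow> 0 < bump p q s"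
  by (simp add: bump_def flat_exp_pos)

lemma bump_integrable_on: "bump p q integrable_on {x..y}"
  by (rule integrable_continuous_interval[OF continuous_on_bump])

lemma integral_bump_eq_0:
  assumes "y \<le> p \<or> q \<le> x"
  shows "integral {x..y} (bump p q) = 0"
proof -
  have "integral {x..y} (bump p q) = integral {x..y} (\<lambda>_. 0::real)"
    using assms by (intro integral_cong) (auto simp: bump_eq_0)
  then show ?thesis by simp
qed

lemma integral_bump_pos:
  assumes "p < q" "x \<le> p"
  shows "0 < integral {x..q} (bump p q)"
proof -
  have "integral {x..q} (bump p q) \<noteq> 0"
  proof
    assume "integral {x..q} (bump p q) = 0"
    then have "(bump p q has_integral 0) (cbox x q)"
      using bump_integrable_on[of p q x q] by (metis cbox_interval has_integral_integral)
    then have "bump p q ((p + q) / 2) = 0"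
      using assms
      by (intro has_integral_0_cbox_imp_0[where a=x and b=q]) (auto simp: bump_nonneg continuous_on_bump)
    moreover have "0 < bump p q ((p + q) / 2)"
      using assms by (intro bump_pos) auto
    ultimately show False by simp
  qed
  moreover have "0 \<le> integral {x..q} (bump p q)"
    by (rule integral_nonneg[OF bump_integrable_on]) (simp add: bump_nonneg)
  ultimately show ?thesis by simp
qed

text \<open>The lower limit \<open>p - 1\<close> (any point left of \<open>p\<close> would do) keeps the point of
  differentiation in the interior of the domain of integration.\<close>

definition smooth_step :: "real \<Rightarrow> real \<Rightarrow> real \<Rightarrow> real" where
  "smooth_step p q t = integral {p - 1..t} (bump p q) / integral {p - 1..q} (bump p q)"

lemma smooth_step_eq_0: "t \<le> p \<Longrightarrow> smooth_step p q t = 0"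
  by (simp add: smooth_step_def integral_bump_eq_0)

lemma smooth_step_eq_1:
  assumes "p < q" "q \<le> t"
  shows "smooth_step p q t = 1"
proof -
  have "integral {p - 1..q} (bump p q) + integral {q..t} (bump p q) = integral {p - 1..t} (bump p q)"
    using assms by (intro Henstock_Kurzweil_Integration.integral_combine bump_integrable_on) auto
  then show ?thesis
    using integral_bump_pos[of p q "p - 1"] assms by (simp add: smooth_step_def integral_bump_eq_0)
qed

lemma smooth_step_nonneg: "p < q \<Longrightarrow> 0 \<le> smooth_step p q t"
  unfolding smooth_step_def using integral_bump_pos[of p q "p - 1"]
  by (intro divide_nonneg_pos integral_nonneg[OF bump_integrable_on]) (auto simp: bump_nonneg)

lemma smooth_step_le_1:
  assumes "p < q"
  shows "smooth_step p q t \<le> 1"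
proof (cases "t < q")
  case True
  have "integral {p - 1..t} (bump p q) \<le> integral {p - 1..q} (bump p q)"
    using True by (intro integral_subset_le bump_integrable_on) (auto simp: bump_nonneg)
  then show ?thesis
    using integral_bump_pos[of p q "p - 1"] assms by (simp add: smooth_step_def)
qed (use smooth_step_eq_1 assms in auto)

lemma smooth_on_smooth_step:
  assumes "p < q"
  shows "smooth_on UNIV (smooth_step p q)"
proof (rule smooth_on_has_vector_derivativeI)
  show "smooth_on UNIV (\<lambda>t. (1 / integral {p - 1..q} (bump p q)) *\<^sub>R bump p q t)"
    by (intro smooth_on_scaleR smooth_on_const smooth_on_bump)
  fix t :: real
  show "(smooth_step p q has_vector_derivative
      (1 / integral {p - 1..q} (bump p q)) *\<^sub>R bump p q t) (at t within UNIV)"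
  proof (cases "t < p")
    case True
    have "((\<lambda>_. 0) has_vector_derivative (1 / integral {p - 1..q} (bump p q)) *\<^sub>R bump p q t) (at t)"
      using True by (simp add: bump_eq_0 has_vector_derivative_const)
    then show ?thesis
      by (rule has_vector_derivative_transform_within_open[where S="{..<p}"])
        (use True in \<open>auto simp: smooth_step_eq_0\<close>)
  next
    case False
    have "((\<lambda>u. integral {p - 1..u} (bump p q)) has_vector_derivative bump p q t)
        (at t within {p - 1..t + 1})"
      using False by (intro integral_has_vector_derivative continuous_on_bump) auto
    moreover have "at t within {p - 1..t + 1} = at t"
      using False by (intro at_within_interior) auto
    ultimately show ?thesis
      unfolding smooth_step_def using has_vector_derivative_scaleR_right
      by (fastforce simp: divide_inverse_commute)
  qed
qed

definition plateau :: "real \<Rightarrow> real \<Rightarrow> real \<Rightarrow> real" where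
  "plateau a b t = smooth_step (a + (b - a) / 8) (a + (b - a) / 4) t *
     smooth_step (a + (b - a) / 8) (a + (b - a) / 4) (a + b - t)"

context
  fixes a b :: real
  assumes ab: "a < b"
begin

private lemma plateau_step_lt: "a + (b - a) / 8 < a + (b - a) / 4"
  using ab by simp

lemma smooth_on_plateau: "smooth_on S (plateau a b)"
proof -
  have "smooth_on UNIV (\<lambda>t. smooth_step (a + (b - a) / 8) (a + (b - a) / 4) t *\<^sub>R
      smooth_step (a + (b - a) / 8) (a + (b - a) / 4) ((- 1) * t + (a + b)))"
    by (intro smooth_on_scaleR smooth_on_compose_affine smooth_on_smooth_step plateau_step_lt)
  then show ?thesis
    by (auto simp: plateau_def[abs_def] intro: smooth_on_subset)
qed

lemma plateau_nonneg: "0 \<le> plateau a b t"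
  using smooth_step_nonneg[OF plateau_step_lt] by (simp add: plateau_def)

lemma plateau_le_1: "plateau a b t \<le> 1"
  using smooth_step_nonneg[OF plateau_step_lt] smooth_step_le_1[OF plateau_step_lt]
  by (simp add: plateau_def mult_le_one)

lemma plateau_reflect: "plateau a b (a + b - t) = plateau a b t"
  by (simp add: plateau_def mult.commute)

lemma plateau_scaled_pos:
  assumes "0 < 1 + l"
  shows "0 < 1 + l * plateau a b t"
proof -
  have "0 < (1 - plateau a b t) + plateau a b t * (1 + l)"
  proof (cases "plateau a b t = 1")
    case False
    then show ?thesis
      using plateau_nonneg[of t] plateau_le_1[of t] assms by (intro add_pos_nonneg) auto
  qed (use assms in simp)
  then show ?thesis
    by (simp add: algebra_simps)
qed

lemma plateau_eq_0:
  assumes "t \<le> a + (b - a) / 8 \<or> b - (b - a) / 8 \<le> t"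
  shows "plateau a b t = 0"
proof -
  have "t \<le> a + (b - a) / 8 \<or> a + b - t \<le> a + (b - a) / 8"
    using assms by linarith
  then show ?thesis
    by (auto simp: plateau_def smooth_step_eq_0)
qed

lemma plateau_eq_1:
  assumes "a + (b - a) / 4 \<le> t" "t \<le> b - (b - a) / 4"
  shows "plateau a b t = 1"
proof -
  have "a + (b - a) / 4 \<le> a + b - t"
    using assms by linarith
  then show ?thesis
    using assms plateau_step_lt by (simp add: plateau_def smooth_step_eq_1)
qed

end

section \<open>Round suspensions are circular arcs\<close>

lemma has_vector_derivative_constant_on_interval:
  fixes F :: "real \<Rightarrow> 'a::real_normed_vector"
  assumes "a < b" "t \<in> {a..b}" "(F has_vector_derivative F') (at t within {a..b})"
    and "\<forall>s\<in>{a..b}. F s = K"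
  shows "F' = 0"
proof -
  have "(F has_vector_derivative 0) (at t within {a..b})"
    using has_vector_derivative_transform[OF assms(2), of F "\<lambda>_. K" 0] assms(4)
      has_vector_derivative_const by auto
  then show ?thesis
    using vector_derivative_unique_within_closed_interval[of a b t F F' 0] assms(1-3) by auto
qed

lemma inner_constant_on_interval_derivative:
  fixes x y :: "real \<Rightarrow> 'a::real_inner"
  assumes "a < b" "t \<in> {a..b}"
    and "(x has_vector_derivative x') (at t within {a..b})"
    and "(y has_vector_derivative y') (at t within {a..b})"
    and "\<forall>s\<in>{a..b}. x s \<bullet> y s = K"
  shows "x t \<bullet> y' + x' \<bullet> y t = 0"
  using has_vector_derivative_inner[OF assms(3,4)]
  by (rule has_vector_derivative_constant_on_interval[OF assms(1,2)]) (use assms(5) in blast)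

lemma orthogonal_to_orthogonal_triple_eq_0:
  fixes x y z w :: "real^3"
  assumes "x \<noteq> 0" "y \<noteq> 0" "z \<noteq> 0" "x \<bullet> y = 0" "x \<bullet> z = 0" "y \<bullet> z = 0"
    and "w \<bullet> x = 0" "w \<bullet> y = 0" "w \<bullet> z = 0"
  shows "w = 0"
proof -
  have "pairwise orthogonal {x, y, z}"
    using assms by (auto simp: pairwise_def orthogonal_def inner_commute)
  then have "independent {x, y, z}"
    using pairwise_orthogonal_independent assms(1-3) by blast
  moreover have "x \<noteq> y" "x \<noteq> z" "y \<noteq> z"
    using assms by auto
  then have "card {x, y, z} = 3"
    by auto
  ultimately have "span {x, y, z} = UNIV"
    using card_ge_dim_independent[of "{x, y, z}" UNIV] by (auto simp: dim_UNIV)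
  then have "orthogonal w w"
    using orthogonal_to_span[of w "{x, y, z}" w] assms(7-9) by (auto simp: orthogonal_def)
  then show ?thesis
    by (simp add: orthogonal_def)
qed

lemma integral_curve_constant_speed:
  fixes \<alpha> :: "real \<Rightarrow> 'a::banach"
  assumes "a < b" "continuous_on {a..b} (\<lambda>s. f s *\<^sub>R \<alpha> s)"
    and "\<forall>t\<in>{a..b}. norm (\<alpha> t) = 1" "\<forall>t\<in>{a..b}. 0 < f t"
    and "\<forall>t\<in>{a..b}. \<exists>v. ((\<lambda>t. integral {a..t} (\<lambda>s. f s *\<^sub>R \<alpha> s)) has_vector_derivative v)
           (at t within {a..b}) \<and> norm v = c"
    and "t \<in> {a..b}"
  shows "f t = c"
proof -
  obtain v where v: "((\<lambda>t. integral {a..t} (\<lambda>s. f s *\<^sub>R \<alpha> s)) has_vector_derivative v)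
      (at t within {a..b})" "norm v = c"
    using assms(5,6) by blast
  moreover have "((\<lambda>t. integral {a..t} (\<lambda>s. f s *\<^sub>R \<alpha> s)) has_vector_derivative f t *\<^sub>R \<alpha> t)
      (at t within {a..b})"
    by (rule integral_has_vector_derivative[OF assms(2,6)])
  ultimately have "v = f t *\<^sub>R \<alpha> t"
    using vector_derivative_unique_within_closed_interval[of a b t] assms(1,6) by auto
  then show ?thesis
    using v(2) assms(3,4,6) by force
qed

text \<open>Differentiating the constraints \<open>|w|\<^sup>2 = r\<^sup>2\<close>, \<open>w \<bullet> n = 0\<close>, \<open>|\<alpha>|\<^sup>2 = 1\<close> and the
  resulting \<open>w \<bullet> \<alpha> = 0\<close> determines \<open>\<alpha>'\<close> in the orthogonal frame \<open>w, \<alpha>, n\<close>.\<close>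

lemma circle_direction_derivative:
  fixes w \<alpha> \<alpha>' :: "real \<Rightarrow> real^3"
  assumes ab: "a < b" and "0 < r" "c \<noteq> 0" "n \<noteq> 0" and t: "t \<in> {a..b}"
    and ww: "\<forall>s\<in>{a..b}. w s \<bullet> w s = r\<^sup>2" and wn: "\<forall>s\<in>{a..b}. w s \<bullet> n = 0"
    and \<alpha>\<alpha>: "\<forall>s\<in>{a..b}. \<alpha> s \<bullet> \<alpha> s = 1"
    and dw: "\<And>s. s \<in> {a..b} \<Longrightarrow> (w has_vector_derivative c *\<^sub>R \<alpha> s) (at s within {a..b})"
    and d\<alpha>: "\<And>s. s \<in> {a..b} \<Longrightarrow> (\<alpha> has_vector_derivative \<alpha>' s) (at s within {a..b})"
  shows "\<alpha>' t = - (c / r\<^sup>2) *\<^sub>R w t"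
proof -
  have dn: "((\<lambda>_. n) has_vector_derivative 0) (at s within {a..b})" for s
    by (rule has_vector_derivative_const)
  have w\<alpha>: "w s \<bullet> \<alpha> s = 0" if s: "s \<in> {a..b}" for s
    using inner_constant_on_interval_derivative[OF ab s dw[OF s] dw[OF s] ww] assms(3)
    by (simp add: inner_commute)
  have \<alpha>n: "\<alpha> s \<bullet> n = 0" if s: "s \<in> {a..b}" for s
    using inner_constant_on_interval_derivative[OF ab s dw[OF s] dn wn] assms(3) by simp
  have \<alpha>'n: "\<alpha>' t \<bullet> n = 0"
    using inner_constant_on_interval_derivative[OF ab t d\<alpha>[OF t] dn] \<alpha>n by auto
  have \<alpha>\<alpha>': "\<alpha> t \<bullet> \<alpha>' t = 0"
    using inner_constant_on_interval_derivative[OF ab t d\<alpha>[OF t] d\<alpha>[OF t] \<alpha>\<alpha>]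
    by (simp add: inner_commute)
  have w\<alpha>': "w t \<bullet> \<alpha>' t = - c"
    using inner_constant_on_interval_derivative[OF ab t dw[OF t] d\<alpha>[OF t], of 0] w\<alpha> \<alpha>\<alpha> t
    by simp
  have "\<alpha>' t + (c / r\<^sup>2) *\<^sub>R w t = 0"
  proof (rule orthogonal_to_orthogonal_triple_eq_0)
    show "w t \<noteq> 0" "\<alpha> t \<noteq> 0"
      using ww \<alpha>\<alpha> t \<open>0 < r\<close> by (metis inner_zero_left zero_neq_one power_not_zero less_irrefl)+
    show "(\<alpha>' t + (c / r\<^sup>2) *\<^sub>R w t) \<bullet> w t = 0"
      using w\<alpha>' ww t \<open>0 < r\<close> by (simp add: inner_add_left inner_commute[of "\<alpha>' t"])
    show "(\<alpha>' t + (c / r\<^sup>2) *\<^sub>R w t) \<bullet> \<alpha> t = 0"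
      using \<alpha>\<alpha>' w\<alpha>[OF t] by (simp add: inner_add_left inner_commute[of "\<alpha>' t"])
    show "(\<alpha>' t + (c / r\<^sup>2) *\<^sub>R w t) \<bullet> n = 0"
      using \<alpha>'n wn t by (simp add: inner_add_left)
  qed (use assms w\<alpha> \<alpha>n in auto)
  then show ?thesis
    by (simp add: eq_neg_iff_add_eq_0)
qed

text \<open>The squared distance to the explicit rotating solution has derivative zero.\<close>

lemma rotation_ode_solution:
  fixes x y :: "real \<Rightarrow> 'a::real_inner"
  assumes dx: "\<And>s. s \<in> {a..b} \<Longrightarrow> (x has_vector_derivative - \<omega> *\<^sub>R y s) (at s within {a..b})"
    and dy: "\<And>s. s \<in> {a..b} \<Longrightarrow> (y has_vector_derivative \<omega> *\<^sub>R x s) (at s within {a..b})"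
    and t: "t \<in> {a..b}"
  shows "x t = cos (\<omega> * (t - a)) *\<^sub>R x a - sin (\<omega> * (t - a)) *\<^sub>R y a"
    and "y t = sin (\<omega> * (t - a)) *\<^sub>R x a + cos (\<omega> * (t - a)) *\<^sub>R y a"
proof -
  define X where "X s = cos (\<omega> * (s - a)) *\<^sub>R x a - sin (\<omega> * (s - a)) *\<^sub>R y a" for s
  define Y where "Y s = sin (\<omega> * (s - a)) *\<^sub>R x a + cos (\<omega> * (s - a)) *\<^sub>R y a" for s
  have dX: "(X has_vector_derivative - \<omega> *\<^sub>R Y s) (at s within {a..b})" for s
    unfolding X_def Y_def
    by (auto intro!: derivative_eq_intros simp: algebra_simps)
  have dY: "(Y has_vector_derivative \<omega> *\<^sub>R X s) (at s within {a..b})" for s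
    unfolding X_def Y_def
    by (auto intro!: derivative_eq_intros simp: algebra_simps)
  have dx': "((\<lambda>s. x s - X s) has_vector_derivative - \<omega> *\<^sub>R (y s - Y s)) (at s within {a..b})"
    and dy': "((\<lambda>s. y s - Y s) has_vector_derivative \<omega> *\<^sub>R (x s - X s)) (at s within {a..b})"
    if "s \<in> {a..b}" for s
    using has_vector_derivative_diff[OF dx[OF that] dX] has_vector_derivative_diff[OF dy[OF that] dY]
    by (simp_all add: scaleR_diff_right)
  define E where "E s = (x s - X s) \<bullet> (x s - X s) + (y s - Y s) \<bullet> (y s - Y s)" for s
  have "(E has_real_derivative 0) (at s within {a..b})" if s: "s \<in> {a..b}" for s
  proof -
    have "(E has_vector_derivative
        (x s - X s) \<bullet> (- \<omega> *\<^sub>R (y s - Y s)) + (- \<omega> *\<^sub>R (y s - Y s)) \<bullet> (x s - X s) +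
        ((y s - Y s) \<bullet> (\<omega> *\<^sub>R (x s - X s)) + (\<omega> *\<^sub>R (x s - X s)) \<bullet> (y s - Y s)))
        (at s within {a..b})"
      unfolding E_def
      by (intro has_vector_derivative_add has_vector_derivative_inner dx'[OF s] dy'[OF s])
    then show ?thesis
      by (simp add: has_real_derivative_iff_has_vector_derivative inner_commute)
  qed
  then obtain K where "\<forall>s\<in>{a..b}. E s = K"
    using has_field_derivative_zero_constant[of "{a..b}" E] by auto
  moreover have "E a = 0" "a \<in> {a..b}"
    using t by (auto simp: E_def X_def Y_def)
  ultimately have "E t = 0"
    using t by auto
  moreover have "0 \<le> (x t - X t) \<bullet> (x t - X t)" "0 \<le> (y t - Y t) \<bullet> (y t - Y t)"
    by simp_all
  ultimately have "(x t - X t) \<bullet> (x t - X t) = 0" "(y t - Y t) \<bullet> (y t - Y t) = 0"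
    unfolding E_def by linarith+
  then show "x t = cos (\<omega> * (t - a)) *\<^sub>R x a - sin (\<omega> * (t - a)) *\<^sub>R y a"
    and "y t = sin (\<omega> * (t - a)) *\<^sub>R x a + cos (\<omega> * (t - a)) *\<^sub>R y a"
    by (simp_all add: X_def Y_def)
qed

lemma circle_uniform_rotation:
  fixes w \<alpha> \<alpha>' :: "real \<Rightarrow> real^3"
  assumes ab: "a < b" and "0 < r" "0 < c" "n \<noteq> 0"
    and ww: "\<forall>s\<in>{a..b}. w s \<bullet> w s = r\<^sup>2" and wn: "\<forall>s\<in>{a..b}. w s \<bullet> n = 0"
    and \<alpha>\<alpha>: "\<forall>s\<in>{a..b}. \<alpha> s \<bullet> \<alpha> s = 1"
    and dw: "\<And>s. s \<in> {a..b} \<Longrightarrow> (w has_vector_derivative c *\<^sub>R \<alpha> s) (at s within {a..b})"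
    and d\<alpha>: "\<And>s. s \<in> {a..b} \<Longrightarrow> (\<alpha> has_vector_derivative \<alpha>' s) (at s within {a..b})"
    and t: "t \<in> {a..b}"
  shows "\<alpha> t = cos (c / r * (t - a)) *\<^sub>R \<alpha> a - sin (c / r * (t - a)) *\<^sub>R ((1 / r) *\<^sub>R w a)"
    and "(1 / r) *\<^sub>R w t = sin (c / r * (t - a)) *\<^sub>R \<alpha> a + cos (c / r * (t - a)) *\<^sub>R ((1 / r) *\<^sub>R w a)"
proof -
  have "(\<alpha> has_vector_derivative - (c / r) *\<^sub>R ((1 / r) *\<^sub>R w s)) (at s within {a..b})"
    if s: "s \<in> {a..b}" for s
    using d\<alpha>[OF s] circle_direction_derivative[OF ab \<open>0 < r\<close> _ \<open>n \<noteq> 0\<close> s ww wn \<alpha>\<alpha> dw d\<alpha>]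
      \<open>0 < c\<close> \<open>0 < r\<close> by (simp add: power2_eq_square)
  moreover have "((\<lambda>t. (1 / r) *\<^sub>R w t) has_vector_derivative (c / r) *\<^sub>R \<alpha> s) (at s within {a..b})"
    if s: "s \<in> {a..b}" for s
    using has_vector_derivative_scaleR_right[OF dw[OF s], of "1 / r"] by simp
  ultimately show "\<alpha> t = cos (c / r * (t - a)) *\<^sub>R \<alpha> a - sin (c / r * (t - a)) *\<^sub>R ((1 / r) *\<^sub>R w a)"
    and "(1 / r) *\<^sub>R w t = sin (c / r * (t - a)) *\<^sub>R \<alpha> a + cos (c / r * (t - a)) *\<^sub>R ((1 / r) *\<^sub>R w a)"
    using rotation_ode_solution[of a b \<alpha> "c / r" "\<lambda>t. (1 / r) *\<^sub>R w t" t] t by auto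
qed

lemma round_suspension_constant_speed_on_circle:
  fixes \<alpha> :: "real \<Rightarrow> real^3"
  assumes ab: "a < b" and cont: "continuous_on {a..b} (\<lambda>s. f s *\<^sub>R \<alpha> s)"
    and "\<forall>t\<in>{a..b}. \<alpha> t \<in> sphere 0 1" "\<forall>t\<in>{a..b}. f t > 0"
    and round: "round_suspension eps a b (\<lambda>t. integral {a..t} (\<lambda>s. f s *\<^sub>R \<alpha> s))"
  obtains c r n p where "0 < c" "0 < r" "n \<noteq> 0" "\<forall>t\<in>{a..b}. f t = c"
    "\<forall>t\<in>{a..b}. (integral {a..t} (\<lambda>s. f s *\<^sub>R \<alpha> s) - p) \<bullet> (integral {a..t} (\<lambda>s. f s *\<^sub>R \<alpha> s) - p) = r\<^sup>2"
    "\<forall>t\<in>{a..b}. (integral {a..t} (\<lambda>s. f s *\<^sub>R \<alpha> s) - p) \<bullet> n = 0"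
proof -
  obtain c where "\<forall>t\<in>{a..b}. \<exists>v. ((\<lambda>t. integral {a..t} (\<lambda>s. f s *\<^sub>R \<alpha> s)) has_vector_derivative v)
      (at t within {a..b}) \<and> norm v = c"
    using round unfolding round_suspension_def by blast
  then have fc: "\<forall>t\<in>{a..b}. f t = c"
    using integral_curve_constant_speed[OF ab cont] assms(3,4) by auto
  moreover have "0 < c"
    using fc assms(4) ab by force
  moreover obtain p r n where "0 < r" "n \<noteq> 0" and
    "(\<lambda>t. integral {a..t} (\<lambda>s. f s *\<^sub>R \<alpha> s)) ` {a..b} \<subseteq> {x. dist x p = r \<and> (x - p) \<bullet> n = 0}"
    using round unfolding round_suspension_def round_circle_def by blast
  ultimately show ?thesis
    using that[of c r n p] by (auto simp: dist_norm dot_square_norm)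
qed

lemma round_suspension_circular_arc:
  fixes \<alpha> :: "real \<Rightarrow> real^3" and f :: "real \<Rightarrow> real"
  assumes ab: "a < b" and "smooth_on {a..b} \<alpha>" "\<forall>t\<in>{a..b}. \<alpha> t \<in> sphere 0 1"
    and "smooth_on {a..b} f" "\<forall>t\<in>{a..b}. f t > 0"
    and round: "round_suspension eps a b (\<lambda>t. integral {a..t} (\<lambda>s. f s *\<^sub>R \<alpha> s))"
  obtains c r u v where "0 < c" "0 < r" "u \<bullet> u = 1" "v \<bullet> v = 1" "u \<bullet> v = 0"
    "\<forall>t\<in>{a..b}. f t = c"
    "\<forall>t\<in>{a..b}. \<alpha> t = cos (c / r * (t - a)) *\<^sub>R u + sin (c / r * (t - a)) *\<^sub>R v"
    "\<forall>t\<in>{a..b}. integral {a..t} (\<lambda>s. f s *\<^sub>R \<alpha> s) =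
       r *\<^sub>R (sin (c / r * (t - a)) *\<^sub>R u + (1 - cos (c / r * (t - a))) *\<^sub>R v)"
proof -
  define \<beta> where "\<beta> t = integral {a..t} (\<lambda>s. f s *\<^sub>R \<alpha> s)" for t
  have cont: "continuous_on {a..b} (\<lambda>s. f s *\<^sub>R \<alpha> s)"
    using assms by (intro continuous_on_scaleR smooth_on_imp_continuous_on)
  have \<alpha>\<alpha>: "\<forall>t\<in>{a..b}. \<alpha> t \<bullet> \<alpha> t = 1"
    using assms(3) by (simp add: dot_square_norm)
  obtain c r n p where "0 < c" "0 < r" "n \<noteq> 0" and fc: "\<forall>t\<in>{a..b}. f t = c"
    and on_circle: "\<forall>t\<in>{a..b}. (\<beta> t - p) \<bullet> (\<beta> t - p) = r\<^sup>2" "\<forall>t\<in>{a..b}. (\<beta> t - p) \<bullet> n = 0"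
    using round_suspension_constant_speed_on_circle[OF ab cont assms(3,5) round] unfolding \<beta>_def .
  define w where "w t = \<beta> t - p" for t
  note ww = on_circle(1)[folded w_def] and wn = on_circle(2)[folded w_def]
  have dw: "(w has_vector_derivative c *\<^sub>R \<alpha> t) (at t within {a..b})" if "t \<in> {a..b}" for t
    unfolding w_def \<beta>_def has_vector_derivative_diff_const
    using integral_has_vector_derivative[OF cont that] fc that by simp
  obtain \<alpha>' where d\<alpha>: "\<And>t. t \<in> {a..b} \<Longrightarrow> (\<alpha> has_vector_derivative \<alpha>' t) (at t within {a..b})"
    using smooth_on_has_vector_derivativeE[OF assms(2)] by metis
  define \<omega> where "\<omega> = c / r"
  have rotation:
    "\<alpha> t = cos (\<omega> * (t - a)) *\<^sub>R \<alpha> a - sin (\<omega> * (t - a)) *\<^sub>R ((1 / r) *\<^sub>R w a)"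
    "(1 / r) *\<^sub>R w t = sin (\<omega> * (t - a)) *\<^sub>R \<alpha> a + cos (\<omega> * (t - a)) *\<^sub>R ((1 / r) *\<^sub>R w a)"
    if "t \<in> {a..b}" for t
    using circle_uniform_rotation[OF ab \<open>0 < r\<close> \<open>0 < c\<close> \<open>n \<noteq> 0\<close> ww wn \<alpha>\<alpha> dw d\<alpha> that]
    by (simp_all add: \<omega>_def)
  define u where "u = \<alpha> a"
  define v where "v = - (1 / r) *\<^sub>R w a"
  have a: "a \<in> {a..b}"
    using ab by simp
  have "u \<bullet> u = 1" "v \<bullet> v = 1"
    using \<alpha>\<alpha> ww a \<open>0 < r\<close> by (auto simp: u_def v_def power2_eq_square)
  moreover have "u \<bullet> v = 0"
    using inner_constant_on_interval_derivative[OF ab a dw[OF a] dw[OF a] ww] \<open>0 < c\<close>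
    by (simp add: u_def v_def inner_commute)
  moreover have "\<beta> t = r *\<^sub>R (sin (\<omega> * (t - a)) *\<^sub>R u + (1 - cos (\<omega> * (t - a))) *\<^sub>R v)"
    if "t \<in> {a..b}" for t
  proof -
    have "p = r *\<^sub>R v"
      using \<open>0 < r\<close> by (simp add: v_def w_def \<beta>_def)
    moreover have "w t = r *\<^sub>R ((1 / r) *\<^sub>R w t)"
      using \<open>0 < r\<close> by simp
    then have "w t = r *\<^sub>R (sin (\<omega> * (t - a)) *\<^sub>R u - cos (\<omega> * (t - a)) *\<^sub>R v)"
      unfolding rotation(2)[OF that] by (simp add: u_def v_def)
    ultimately show ?thesis
      by (simp add: w_def algebra_simps)
  qed
  ultimately show ?thesis
  proof (intro that[of c r u v] ballI)
    fix t assume t: "t \<in> {a..b}"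
    show "\<alpha> t = cos (c / r * (t - a)) *\<^sub>R u + sin (c / r * (t - a)) *\<^sub>R v"
      unfolding rotation(1)[OF t] by (simp add: u_def v_def \<omega>_def)
  qed (use \<open>0 < c\<close> \<open>0 < r\<close> fc in \<open>auto simp: \<beta>_def \<omega>_def\<close>)
qed

section \<open>Circular arcs in isosceles triangles\<close>

lemma inner_orthonormal_combination:
  fixes u v :: "'a::real_inner"
  assumes "u \<bullet> u = 1" "v \<bullet> v = 1" "u \<bullet> v = 0"
  shows "(p1 *\<^sub>R u + p2 *\<^sub>R v) \<bullet> (q1 *\<^sub>R u + q2 *\<^sub>R v) = p1 * q1 + p2 * q2"
  using assms by (simp add: inner_add_left inner_add_right inner_commute[of v u])

lemma orthonormal_rotated_frame:
  fixes u v :: "'a::real_inner"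
  assumes "u \<bullet> u = 1" "v \<bullet> v = 1" "u \<bullet> v = 0"
  shows "(cos T *\<^sub>R u + sin T *\<^sub>R v) \<bullet> (cos T *\<^sub>R u + sin T *\<^sub>R v) = 1"
    and "(sin T *\<^sub>R u + (- cos T) *\<^sub>R v) \<bullet> (sin T *\<^sub>R u + (- cos T) *\<^sub>R v) = 1"
    and "(cos T *\<^sub>R u + sin T *\<^sub>R v) \<bullet> (sin T *\<^sub>R u + (- cos T) *\<^sub>R v) = 0"
  unfolding inner_orthonormal_combination[OF assms] by (simp_all add: power2_eq_square[symmetric])

lemma inner_rotated_frame:
  fixes u v :: "'a::real_inner"
  assumes "u \<bullet> u = 1" "v \<bullet> v = 1" "u \<bullet> v = 0"
  shows "(cos s *\<^sub>R u + sin s *\<^sub>R v) \<bullet> (cos T *\<^sub>R u + sin T *\<^sub>R v) = cos (T - s)"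
    and "(cos s *\<^sub>R u + sin s *\<^sub>R v) \<bullet> (sin T *\<^sub>R u + (- cos T) *\<^sub>R v) = sin (T - s)"
  unfolding inner_orthonormal_combination[OF assms] by (simp_all add: cos_diff sin_diff mult.commute)

lemma circle_chord_half_angle:
  fixes u v :: "'a::real_vector"
  shows "r *\<^sub>R (sin (2 * s) *\<^sub>R u + (1 - cos (2 * s)) *\<^sub>R v) =
    (2 * r * sin s) *\<^sub>R (cos s *\<^sub>R u + sin s *\<^sub>R v)"
proof -
  have "sin (2 * s) = 2 * sin s * cos s" "1 - cos (2 * s) = 2 * sin s * sin s"
    by (simp_all add: sin_double cos_double_sin power2_eq_square)
  then show ?thesis
    by (simp add: scaleR_add_right ac_simps)
qed

text \<open>Every point \<open>y\<close> of a triangle with vertices \<open>0\<close>, \<open>K e\<close> and an apex \<open>x\<close> above the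
  midpoint of the base lies below the side through \<open>0\<close> and \<open>x\<close>, whose slope in the
  direction \<open>\<nu>\<close> is at most \<open>2h/K\<close>.\<close>

lemma convex_hull_triangle_slope_le:
  fixes e \<nu> x y :: "'a::real_inner"
  assumes "y \<in> convex hull {0, K *\<^sub>R e, x}" "0 \<le> K"
    and "e \<bullet> e = 1" "e \<bullet> \<nu> = 0" "x \<bullet> e = K / 2" "\<bar>x \<bullet> \<nu>\<bar> \<le> h"
  shows "(y \<bullet> \<nu>) * K \<le> 2 * h * (y \<bullet> e)"
proof -
  obtain l1 l2 where l: "0 \<le> l1" "0 \<le> l2" "y = l1 *\<^sub>R (K *\<^sub>R e) + l2 *\<^sub>R x"
    using assms(1) unfolding convex_hull_3 by auto
  then have "y \<bullet> e = l1 * K + l2 * (K / 2)" "y \<bullet> \<nu> = l2 * (x \<bullet> \<nu>)"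
    using assms(3-5) by (simp_all add: inner_add_left)
  moreover have "l2 * (x \<bullet> \<nu>) * K \<le> l2 * h * K"
    using l assms(2,6) by (intro mult_right_mono mult_left_mono) auto
  moreover have "0 \<le> h * l1 * K"
    using l assms(2,6) by simp
  ultimately show ?thesis
    by (simp add: algebra_simps)
qed

lemma cross_mult_le_trans:
  fixes P Q K H c s :: real
  assumes "0 < s" "0 \<le> Q" "0 \<le> H" "c * Q \<le> s * P" "K * s \<le> 2 * H * c"
  shows "Q * K \<le> 2 * H * P"
proof -
  have "(Q * K) * s \<le> Q * (2 * H * c)"
    using mult_left_mono[OF assms(5,2)] by (simp add: algebra_simps)
  also have "\<dots> \<le> (2 * H * P) * s"
    using mult_left_mono[OF assms(4), of "2 * H"] assms(3) by (simp add: algebra_simps)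
  finally show ?thesis
    using assms(1) by simp
qed

lemma convex_hull_triangle_memI:
  fixes e \<nu> :: "'a::real_vector"
  assumes "0 < K" "0 < H" "0 \<le> Q" "Q * K \<le> 2 * H * P" "Q * K \<le> 2 * H * (K - P)"
  shows "P *\<^sub>R e + Q *\<^sub>R \<nu> \<in> convex hull {0, K *\<^sub>R e, (K / 2) *\<^sub>R e + H *\<^sub>R \<nu>}"
proof -
  define l2 where "l2 = Q / H"
  define l1 where "l1 = P / K - Q / (2 * H)"
  have "Q / (2 * H) \<le> P / K" "P / K + Q / (2 * H) \<le> 1"
    using assms by (simp_all add: field_simps)
  then have "0 \<le> l1" "0 \<le> l2" "0 \<le> 1 - l1 - l2"
    using assms by (simp_all add: l1_def l2_def)
  moreover have "P *\<^sub>R e + Q *\<^sub>R \<nu> = (1 - l1 - l2) *\<^sub>R 0 + l1 *\<^sub>R (K *\<^sub>R e) + l2 *\<^sub>R ((K / 2) *\<^sub>R e + H *\<^sub>R \<nu>)"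
    using assms(1,2) by (simp add: l1_def l2_def algebra_simps)
  ultimately show ?thesis
    unfolding convex_hull_3 by fastforce
qed

lemma isosceles_triangle_over_chord:
  fixes e \<nu> :: "real^3"
  assumes "e \<bullet> \<nu> = 0" "norm \<nu> = 1" "0 \<le> H"
  shows "isosceles_triangle 0 (K *\<^sub>R e) H (convex hull {0, K *\<^sub>R e, (K / 2) *\<^sub>R e + H *\<^sub>R \<nu>})"
  unfolding isosceles_triangle_def
  by (rule exI[of _ "(K / 2) *\<^sub>R e + H *\<^sub>R \<nu>"]) (use assms in \<open>simp add: midpoint_def inner_commute[of \<nu> e]\<close>)

lemma circular_arc_angle_lt_2pi:
  fixes u v :: "'a::real_vector"
  assumes "0 < \<omega>" and inj: "inj_on \<beta> {a..b}"
    and arc: "\<forall>t\<in>{a..b}. \<beta> t = r *\<^sub>R (sin (\<omega> * (t - a)) *\<^sub>R u + (1 - cos (\<omega> * (t - a))) *\<^sub>R v)"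
  shows "\<omega> * (b - a) < 2 * pi"
proof (rule ccontr)
  assume "\<not> \<omega> * (b - a) < 2 * pi"
  then have "a + 2 * pi / \<omega> \<in> {a..b}"
    using assms(1) by (auto simp: field_simps)
  moreover have "a \<in> {a..b}"
    using calculation by auto
  ultimately have "\<beta> (a + 2 * pi / \<omega>) = \<beta> a"
    using arc assms(1) by simp
  then show False
    using inj_onD[OF inj] \<open>a + 2 * pi / \<omega> \<in> {a..b}\<close> \<open>a \<in> {a..b}\<close> assms(1) by force
qed

lemma suspension_apexE:
  fixes \<beta> :: "real \<Rightarrow> real^3"
  assumes "suspension eps a b \<beta>" "\<beta> a = 0" "\<beta> b = K *\<^sub>R e" "0 < K"
    and "e \<bullet> e = 1" "e \<bullet> \<nu> = 0" "\<nu> \<bullet> \<nu> = 1"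
  obtains x where "x \<bullet> e = K / 2" "\<bar>x \<bullet> \<nu>\<bar> \<le> eps" "0 \<le> eps"
    "\<beta> ` {a..b} \<subseteq> convex hull {0, K *\<^sub>R e, x}"
proof -
  obtain x where x: "(x - midpoint (\<beta> a) (\<beta> b)) \<bullet> (\<beta> b - \<beta> a) = 0"
    "norm (x - midpoint (\<beta> a) (\<beta> b)) = eps" "\<beta> ` {a..b} \<subseteq> convex hull {\<beta> a, \<beta> b, x}"
    using assms(1) unfolding suspension_def isosceles_triangle_def by blast
  have mid: "midpoint (\<beta> a) (\<beta> b) = (K / 2) *\<^sub>R e"
    using assms(2,3) by (simp add: midpoint_def)
  have "x \<bullet> e = K / 2"
    using x(1)[unfolded mid] assms(2-5) by (simp add: inner_diff_left)
  moreover have "\<bar>x \<bullet> \<nu>\<bar> \<le> eps"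
  proof -
    have "\<bar>(x - midpoint (\<beta> a) (\<beta> b)) \<bullet> \<nu>\<bar> \<le> eps"
      using Cauchy_Schwarz_ineq2[of "x - midpoint (\<beta> a) (\<beta> b)" \<nu>] x(2) assms(7)
      by (simp add: norm_eq_sqrt_inner)
    then show ?thesis
      using assms(6) by (simp add: mid inner_diff_left)
  qed
  ultimately show ?thesis
    using that x(2,3) assms(2,3) by auto
qed

text \<open>Letting the chord angle \<open>\<sigma>\<close> tend to the tangent angle \<open>T\<close>.\<close>

lemma height_bound_of_chord_angles:
  assumes "0 < T" "T < pi" "0 < r" "0 \<le> eps"
    and chord: "\<And>\<sigma>. 0 < \<sigma> \<Longrightarrow> \<sigma> < T \<Longrightarrow> r * sin T * sin \<sigma> \<le> eps * cos \<sigma>"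
  shows "T < pi / 2" "0 < eps" "r * (sin T)\<^sup>2 \<le> eps * cos T"
proof -
  have "0 \<le> eps * cos T - r * sin T * sin T"
  proof (rule tendsto_lowerbound)
    show "((\<lambda>\<sigma>. eps * cos \<sigma> - r * sin T * sin \<sigma>) \<longlongrightarrow> eps * cos T - r * sin T * sin T) (at_left T)"
      by (intro tendsto_intros)
    show "\<forall>\<^sub>F \<sigma> in at_left T. 0 \<le> eps * cos \<sigma> - r * sin T * sin \<sigma>"
      using eventually_at_left_real[OF \<open>0 < T\<close>] by eventually_elim (use chord in auto)
  qed simp
  then show "r * (sin T)\<^sup>2 \<le> eps * cos T"
    by (simp add: power2_eq_square)
  moreover have "0 < r * sin T * sin T"
    using assms(1-3) by (simp add: sin_gt_zero)
  ultimately have "0 < eps" "0 < cos T"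
    using \<open>0 \<le> eps\<close> \<open>0 \<le> eps * cos T - r * sin T * sin T\<close> zero_less_mult_iff[of eps "cos T"]
    by linarith+
  then show "0 < eps" by simp
  show "T < pi / 2"
  proof (rule ccontr)
    assume "\<not> T < pi / 2"
    then have "cos (pi - T) \<ge> 0"
      using \<open>T < pi\<close> by (intro cos_ge_zero) auto
    then show False
      using \<open>0 < cos T\<close> by simp
  qed
qed

text \<open>The chord from \<open>\<beta> a\<close> to the point of the arc at angle \<open>2 s\<close> makes the angle \<open>T - s\<close>
  with the chord \<open>[\<beta> a, \<beta> b]\<close>; letting \<open>s \<rightarrow> 0\<close> gives the tangent.\<close>

lemma circular_arc_suspension_height:
  fixes u v :: "real^3" and \<beta> :: "real \<Rightarrow> real^3"
  assumes ab: "a < b" and "0 < r" "0 < \<omega>"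
    and uu: "u \<bullet> u = 1" and vv: "v \<bullet> v = 1" and uv: "u \<bullet> v = 0"
    and arc: "\<forall>t\<in>{a..b}. \<beta> t = r *\<^sub>R (sin (\<omega> * (t - a)) *\<^sub>R u + (1 - cos (\<omega> * (t - a))) *\<^sub>R v)"
    and susp: "suspension eps a b \<beta>"
  shows "\<omega> * (b - a) / 2 < pi / 2" "0 < eps"
    "r * (sin (\<omega> * (b - a) / 2))\<^sup>2 \<le> eps * cos (\<omega> * (b - a) / 2)"
proof -
  define T where "T = \<omega> * (b - a) / 2"
  have "0 < T"
    using ab \<open>0 < \<omega>\<close> by (simp add: T_def)
  have "T < pi"
    using circular_arc_angle_lt_2pi[OF \<open>0 < \<omega>\<close> _ arc] susp by (simp add: T_def suspension_def)
  have "0 < sin T"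
    using \<open>0 < T\<close> \<open>T < pi\<close> by (simp add: sin_gt_zero)
  have chord: "\<beta> (a + 2 * s / \<omega>) = (2 * r * sin s) *\<^sub>R (cos s *\<^sub>R u + sin s *\<^sub>R v)"
    if "0 \<le> s" "s \<le> T" for s
  proof -
    have "a + 2 * s / \<omega> \<in> {a..b}"
      using that \<open>0 < \<omega>\<close> by (auto simp: T_def field_simps)
    then show ?thesis
      using arc \<open>0 < \<omega>\<close> circle_chord_half_angle[of r s u v] by simp
  qed
  define e where "e = cos T *\<^sub>R u + sin T *\<^sub>R v"
  define \<nu> where "\<nu> = sin T *\<^sub>R u + (- cos T) *\<^sub>R v"
  have "e \<bullet> e = 1" "\<nu> \<bullet> \<nu> = 1" "e \<bullet> \<nu> = 0"
    unfolding e_def \<nu>_def by (rule orthonormal_rotated_frame[OF uu vv uv])+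
  define K where "K = 2 * r * sin T"
  have "0 < K"
    using \<open>0 < r\<close> \<open>0 < sin T\<close> by (simp add: K_def)
  have \<beta>a: "\<beta> a = 0" and \<beta>b: "\<beta> b = K *\<^sub>R e"
    using arc ab chord[of T] \<open>0 < T\<close> \<open>0 < \<omega>\<close> by (simp_all add: K_def e_def T_def)
  obtain x where xe: "x \<bullet> e = K / 2" and x\<nu>: "\<bar>x \<bullet> \<nu>\<bar> \<le> eps" and "0 \<le> eps"
    and hull: "\<beta> ` {a..b} \<subseteq> convex hull {0, K *\<^sub>R e, x}"
    using suspension_apexE[OF susp \<beta>a \<beta>b \<open>0 < K\<close> \<open>e \<bullet> e = 1\<close> \<open>e \<bullet> \<nu> = 0\<close> \<open>\<nu> \<bullet> \<nu> = 1\<close>] .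
  have tangent: "r * sin T * sin \<sigma> \<le> eps * cos \<sigma>" if "0 < \<sigma>" "\<sigma> < T" for \<sigma>
  proof -
    define s where "s = T - \<sigma>"
    have "0 < sin s"
      using that \<open>T < pi\<close> by (simp add: s_def sin_gt_zero)
    define y where "y = \<beta> (a + 2 * s / \<omega>)"
    have "y \<in> convex hull {0, K *\<^sub>R e, x}"
      using hull that \<open>0 < \<omega>\<close> unfolding y_def s_def by (force simp: T_def field_simps)
    from convex_hull_triangle_slope_le[OF this _ \<open>e \<bullet> e = 1\<close> \<open>e \<bullet> \<nu> = 0\<close> xe x\<nu>] \<open>0 < K\<close>
    have slope: "(y \<bullet> \<nu>) * K \<le> 2 * eps * (y \<bullet> e)"
      by simp
    have "y = (2 * r * sin s) *\<^sub>R (cos s *\<^sub>R u + sin s *\<^sub>R v)"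
      using chord[of s] that by (simp add: y_def s_def)
    then have "y \<bullet> e = 2 * r * sin s * cos \<sigma>" "y \<bullet> \<nu> = 2 * r * sin s * sin \<sigma>"
      using inner_rotated_frame[OF uu vv uv, of s T] by (simp_all add: e_def \<nu>_def s_def)
    with slope have "(2 * r * sin s) * (2 * (r * sin T * sin \<sigma>)) \<le> (2 * r * sin s) * (2 * (eps * cos \<sigma>))"
      by (simp add: K_def algebra_simps)
    then show ?thesis
      using \<open>0 < r\<close> \<open>0 < sin s\<close> by (simp add: mult_le_cancel_left_pos)
  qed
  show "\<omega> * (b - a) / 2 < pi / 2" "0 < eps"
    "r * (sin (\<omega> * (b - a) / 2))\<^sup>2 \<le> eps * cos (\<omega> * (b - a) / 2)"
    using height_bound_of_chord_angles[OF \<open>0 < T\<close> \<open>T < pi\<close> \<open>0 < r\<close> \<open>0 \<le> eps\<close> tangent]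
    by (auto simp: T_def)
qed

section \<open>Changing the speed along a circular arc\<close>

lemma one_plus_scaled_ratio_pos:
  fixes I J k :: real
  assumes "0 < I" "I < 2 * J" "1 / 2 \<le> k"
  shows "0 < 1 + (k - 1) * I / J"
proof (cases "k < 1")
  case True
  have "(1 - k) * I \<le> I / 2"
    using assms(1,3) by (simp add: mult_right_mono)
  then have "(1 - k) * I < 1 * J"
    using assms(2) by linarith
  then have "(1 - k) * I / J < 1"
    using assms(1,2) by (simp add: divide_less_eq)
  then show ?thesis
    by (simp add: algebra_simps diff_divide_distrib)
next
  case False
  then have "0 \<le> (k - 1) * I / J"
    using assms(1,2) by simp
  then show ?thesis
    by simp
qed

text \<open>With \<open>e\<close> the
  direction of the chord and \<open>\<nu>\<close> the normal towards the arc, the direction of the arc at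
  \<open>s\<close> is \<open>cos \<phi> e - sin \<phi> \<nu>\<close> for \<open>\<phi> = tangent_angle s\<close>, which runs from \<open>-T\<close> to \<open>T\<close>.\<close>

locale circular_arc_angle =
  fixes a b \<omega> :: real
  assumes ab: "a < b" and \<omega>_pos: "0 < \<omega>" and half_angle_lt: "\<omega> * (b - a) / 2 < pi / 2"
begin

definition half_angle :: real where
  "half_angle = \<omega> * (b - a) / 2"

definition tangent_angle :: "real \<Rightarrow> real" where
  "tangent_angle s = \<omega> * (s - a) - half_angle"

lemma half_angle_pos: "0 < half_angle"
  using ab \<omega>_pos by (simp add: half_angle_def)

lemma sin_half_angle_pos: "0 < sin half_angle"
  using half_angle_pos half_angle_lt by (intro sin_gt_zero) (auto simp: half_angle_def)

lemma tangent_angle_bounds: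
  assumes "s \<in> {a..b}"
  shows "\<bar>tangent_angle s\<bar> \<le> half_angle"
proof -
  have "0 \<le> \<omega> * (s - a)" "\<omega> * (s - a) \<le> \<omega> * (b - a)"
    using assms \<omega>_pos by (auto intro: mult_left_mono)
  then show ?thesis
    unfolding tangent_angle_def half_angle_def by linarith
qed

lemma tangent_angle_reflect: "tangent_angle (a + b - s) = - tangent_angle s"
  by (simp add: tangent_angle_def half_angle_def algebra_simps)

lemma tangent_angle_mono: "s \<le> t \<Longrightarrow> tangent_angle s \<le> tangent_angle t"
  using \<omega>_pos by (simp add: tangent_angle_def)

lemma cos_tangent_angle_pos: "s \<in> {a..b} \<Longrightarrow> 0 < cos (tangent_angle s)"
  using tangent_angle_bounds[of s] half_angle_lt
  by (intro cos_gt_zero_pi) (auto simp: half_angle_def)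

lemma arc_direction_in_chord_frame:
  fixes u v :: "'a::real_vector"
  shows "cos (\<omega> * (s - a)) *\<^sub>R u + sin (\<omega> * (s - a)) *\<^sub>R v =
    cos (tangent_angle s) *\<^sub>R (cos half_angle *\<^sub>R u + sin half_angle *\<^sub>R v) -
    sin (tangent_angle s) *\<^sub>R (sin half_angle *\<^sub>R u + (- cos half_angle) *\<^sub>R v)"
proof -
  have "\<omega> * (s - a) = tangent_angle s + half_angle"
    by (simp add: tangent_angle_def)
  then show ?thesis
    by (simp add: cos_add sin_add algebra_simps)
qed

lemma continuous_on_tangent_angle [continuous_intros]:
  "continuous_on S (\<lambda>s. h (tangent_angle s))" if "continuous_on UNIV h"
  unfolding tangent_angle_def
  by (rule continuous_on_compose2[OF that]) (auto intro!: continuous_intros)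

lemma integral_cos_tangent_angle:
  assumes "x \<le> y"
  shows "integral {x..y} (\<lambda>s. cos (tangent_angle s)) =
    (sin (tangent_angle y) - sin (tangent_angle x)) / \<omega>"
proof -
  have "((\<lambda>s. sin (tangent_angle s) / \<omega>) has_real_derivative cos (tangent_angle s))
      (at s within {x..y})" for s
    using \<omega>_pos unfolding tangent_angle_def by (auto intro!: derivative_eq_intros)
  then have "((\<lambda>s. cos (tangent_angle s)) has_integral
      sin (tangent_angle y) / \<omega> - sin (tangent_angle x) / \<omega>) {x..y}"
    using assms by (intro fundamental_theorem_of_calculus)
      (auto simp: has_real_derivative_iff_has_vector_derivative[symmetric])
  then show ?thesis
    by (simp add: integral_unique diff_divide_distrib)
qed

lemma integral_cos_tangent_angle_full:
  "integral {a..b} (\<lambda>s. cos (tangent_angle s)) = 2 * sin half_angle / \<omega>"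
proof -
  have "tangent_angle b = half_angle" "tangent_angle a = - half_angle"
    by (simp_all add: tangent_angle_def half_angle_def)
  then show ?thesis
    using integral_cos_tangent_angle[of a b] ab by simp
qed

text \<open>The plateau is \<open>1\<close> on the middle half of \<open>[a, b]\<close>, where the tangent angle runs over
  \<open>[-T/2, T/2]\<close>, and \<open>2 sin (T/2) > sin T\<close>.\<close>

lemma integral_cos_tangent_angle_lt_plateau:
  "integral {a..b} (\<lambda>s. cos (tangent_angle s)) <
    2 * integral {a..b} (\<lambda>s. plateau a b s * cos (tangent_angle s))"
proof -
  define F where "F s = plateau a b s * cos (tangent_angle s)" for s
  define m1 where "m1 = a + (b - a) / 4"
  define m2 where "m2 = b - (b - a) / 4"
  have m: "a \<le> m1" "m1 \<le> m2" "m2 \<le> b"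
    using ab by (simp_all add: m1_def m2_def field_simps)
  have cont: "continuous_on S F" for S
    unfolding F_def using smooth_on_imp_continuous_on[OF smooth_on_plateau[OF ab]]
    by (intro continuous_intros) auto
  have F_nonneg: "0 \<le> F s" if "s \<in> {a..b}" for s
    unfolding F_def using plateau_nonneg[OF ab] cos_tangent_angle_pos[OF that] by simp
  have "integral {a..m1} F + (integral {m1..m2} F + integral {m2..b} F) = integral {a..b} F"
    using m by (simp add: Henstock_Kurzweil_Integration.integral_combine
        integrable_continuous_interval[OF cont])
  moreover have "0 \<le> integral {a..m1} F" "0 \<le> integral {m2..b} F"
    using m F_nonneg by (auto intro!: integral_nonneg integrable_continuous_interval[OF cont])
  moreover have "integral {m1..m2} F = integral {m1..m2} (\<lambda>s. cos (tangent_angle s))"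
    using ab by (intro integral_cong) (simp add: F_def plateau_eq_1 m1_def m2_def)
  moreover have "tangent_angle m2 = half_angle / 2" "tangent_angle m1 = - (half_angle / 2)"
    by (simp_all add: tangent_angle_def half_angle_def m1_def m2_def field_simps)
  ultimately have "2 * sin (half_angle / 2) / \<omega> \<le> integral {a..b} F"
    using integral_cos_tangent_angle[OF m(2)] by simp
  moreover have "sin half_angle < 2 * sin (half_angle / 2)"
  proof -
    have "cos (half_angle / 2) < 1"
      using cos_monotone_0_pi[of 0 "half_angle / 2"] half_angle_pos half_angle_lt
      by (simp add: half_angle_def)
    moreover have "0 < sin (half_angle / 2)"
      using half_angle_pos half_angle_lt by (intro sin_gt_zero) (auto simp: half_angle_def)
    ultimately show ?thesis
      using sin_double[of "half_angle / 2"] by simp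
  qed
  then have "2 * sin half_angle / \<omega> < 2 * (2 * sin (half_angle / 2) / \<omega>)"
    using \<omega>_pos by (simp add: divide_strict_right_mono)
  ultimately show ?thesis
    unfolding integral_cos_tangent_angle_full F_def[symmetric] by linarith
qed

text \<open>The speed is \<open>c (1 + l \<rho>)\<close> with \<open>\<rho>\<close> the plateau; the chord scales by \<open>k\<close> for
  \<open>l = (k - 1) I / J\<close>, and \<open>l > -1\<close> because \<open>I < 2 J\<close>.\<close>

lemma symmetric_speed_exists:
  assumes "0 < c" "1 / 2 \<le> k"
  obtains g where "smooth_on {a..b} g" "\<And>s. 0 < g s" "\<And>s. g (a + b - s) = g s"
    "\<And>t. t \<le> a + (b - a) / 8 \<or> b - (b - a) / 8 \<le> t \<Longrightarrow> g t = c"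
    "integral {a..b} (\<lambda>s. g s * cos (tangent_angle s)) =
       k * integral {a..b} (\<lambda>s. c * cos (tangent_angle s))"
proof -
  define I where "I = integral {a..b} (\<lambda>s. cos (tangent_angle s))"
  define J where "J = integral {a..b} (\<lambda>s. plateau a b s * cos (tangent_angle s))"
  have "0 < I"
    using sin_half_angle_pos \<omega>_pos by (simp add: I_def integral_cos_tangent_angle_full)
  moreover have "I < 2 * J"
    unfolding I_def J_def by (rule integral_cos_tangent_angle_lt_plateau)
  ultimately have "0 < J"
    by simp
  define l where "l = (k - 1) * I / J"
  have "0 < 1 + l"
    unfolding l_def using \<open>0 < I\<close> \<open>I < 2 * J\<close> assms(2) by (rule one_plus_scaled_ratio_pos)
  define g where "g s = c + (c * l) * plateau a b s" for s
  show ?thesis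
  proof (rule that[of g])
    have "smooth_on {a..b} (\<lambda>s. c + (c * l) *\<^sub>R plateau a b s)"
      by (intro smooth_on_add smooth_on_const smooth_on_scaleR smooth_on_plateau[OF ab])
    then show "smooth_on {a..b} g"
      by (simp add: g_def[abs_def])
    fix s
    have "0 < c * (1 + l * plateau a b s)"
      using \<open>0 < c\<close> plateau_scaled_pos[OF ab \<open>0 < 1 + l\<close>] by simp
    then show "0 < g s"
      by (simp add: g_def algebra_simps)
    show "g (a + b - s) = g s"
      by (simp add: g_def plateau_reflect[OF ab])
  next
    fix t
    assume "t \<le> a + (b - a) / 8 \<or> b - (b - a) / 8 \<le> t"
    then show "g t = c"
      by (simp add: g_def plateau_eq_0[OF ab])
  next
    have cont: "continuous_on {a..b} (\<lambda>s. cos (tangent_angle s))"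
      "continuous_on {a..b} (\<lambda>s. plateau a b s * cos (tangent_angle s))"
      using smooth_on_imp_continuous_on[OF smooth_on_plateau[OF ab]] by (auto intro!: continuous_intros)
    have "integral {a..b} (\<lambda>s. g s * cos (tangent_angle s)) = c * I + (c * l) * J"
      unfolding I_def J_def g_def distrib_right mult.assoc
      by (simp add: integral_add integrable_on_mult_right integrable_continuous_interval[OF cont(1)]
          integrable_continuous_interval[OF cont(2)])
    also have "\<dots> = k * (c * I)"
      using \<open>0 < J\<close> by (simp add: l_def field_simps)
    finally show "integral {a..b} (\<lambda>s. g s * cos (tangent_angle s)) =
        k * integral {a..b} (\<lambda>s. c * cos (tangent_angle s))"
      by (simp add: I_def)
  qed
qed

end

lemma integral_reflect_interval:
  fixes F :: "real \<Rightarrow> 'a::real_normed_vector"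
  shows "integral {a..b} (\<lambda>s. F (a + b - s)) = integral {a..b} F"
proof -
  have "integral {a..b} (\<lambda>s. F (a + b - s)) = integral {-b..-a} (\<lambda>x. F (x + (a + b)))"
    using Henstock_Kurzweil_Integration.integral_reflect_real[of b a "\<lambda>s. F (a + b - s)"]
    by (simp add: algebra_simps)
  also have "\<dots> = integral {a..b} F"
    using integral_shift_real_ivl[of a "a + b" b F] by simp
  finally show ?thesis .
qed

text \<open>\<open>chord_coord t\<close> and \<open>height_coord t\<close> are the coordinates of \<open>\<gamma>(t) = \<integral>\<^sub>a\<^sup>t g \<alpha>\<close>
  along \<open>e\<close> and \<open>\<nu>\<close>.\<close>

locale symmetric_speed = circular_arc_angle +
  fixes g :: "real \<Rightarrow> real"
  assumes g_smooth: "smooth_on {a..b} g"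
    and g_pos: "\<And>s. s \<in> {a..b} \<Longrightarrow> 0 < g s"
    and g_reflect: "\<And>s. s \<in> {a..b} \<Longrightarrow> g (a + b - s) = g s"
begin

definition chord_coord :: "real \<Rightarrow> real" where
  "chord_coord t = integral {a..t} (\<lambda>s. g s * cos (tangent_angle s))"

definition height_coord :: "real \<Rightarrow> real" where
  "height_coord t = - integral {a..t} (\<lambda>s. g s * sin (tangent_angle s))"

lemma continuous_on_mult_g:
  "continuous_on {a..b} h \<Longrightarrow> continuous_on {a..b} (\<lambda>s. g s * h s)"
  using smooth_on_imp_continuous_on[OF g_smooth] by (intro continuous_intros)

lemma integrable_g_tangent_angle:
  assumes "continuous_on UNIV h" "a \<le> x" "y \<le> b"
  shows "(\<lambda>s. g s * h (tangent_angle s)) integrable_on {x..y}"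
proof -
  have "continuous_on {a..b} (\<lambda>s. g s * h (tangent_angle s))"
    using assms(1) by (intro continuous_on_mult_g continuous_intros)
  then show ?thesis
    using assms(2,3) by (intro integrable_continuous_interval) (auto elim: continuous_on_subset)
qed

lemma integral_g_tangent_angle_split:
  assumes "continuous_on UNIV h" "t \<in> {a..b}"
  shows "integral {a..t} (\<lambda>s. g s * h (tangent_angle s)) + integral {t..b} (\<lambda>s. g s * h (tangent_angle s))
    = integral {a..b} (\<lambda>s. g s * h (tangent_angle s))"
  using assms by (intro Henstock_Kurzweil_Integration.integral_combine integrable_g_tangent_angle) auto

lemma integral_g_tangent_angle_lincomb:
  assumes "a \<le> x" "y \<le> b"
  shows "integral {x..y} (\<lambda>s. g s * (p * cos (tangent_angle s) + q * sin (tangent_angle s))) =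
    p * integral {x..y} (\<lambda>s. g s * cos (tangent_angle s)) +
    q * integral {x..y} (\<lambda>s. g s * sin (tangent_angle s))"
proof -
  have "(\<lambda>s. g s * cos (tangent_angle s)) integrable_on {x..y}"
    "(\<lambda>s. g s * sin (tangent_angle s)) integrable_on {x..y}"
    using assms continuous_on_cos[OF continuous_on_id] continuous_on_sin[OF continuous_on_id]
    by (auto intro: integrable_g_tangent_angle)
  then show ?thesis
    by (simp add: distrib_left mult.left_commute[of "g _"] integral_add integrable_on_mult_right)
qed

lemma integral_g_tangent_angle_nonneg:
  assumes "continuous_on UNIV h" "a \<le> x" "y \<le> b"
    and "\<And>s. s \<in> {x..y} \<Longrightarrow> 0 \<le> h (tangent_angle s)"
  shows "0 \<le> integral {x..y} (\<lambda>s. g s * h (tangent_angle s))"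
proof (rule integral_nonneg[OF integrable_g_tangent_angle[OF assms(1-3)]])
  fix s assume "s \<in> {x..y}"
  then show "0 \<le> g s * h (tangent_angle s)"
    using assms(2-4) g_pos[of s] by simp
qed

lemma chord_coord_strict_mono:
  assumes "s \<in> {a..b}" "t \<in> {a..b}" "s < t"
  shows "chord_coord s < chord_coord t"
proof -
  have "integral {s..t} (\<lambda>_. 0) < integral {s..t} (\<lambda>x. g x * cos (tangent_angle x))"
  proof (rule integral_less_real)
    show "continuous_on {s..t} (\<lambda>x. g x * cos (tangent_angle x))"
      using assms continuous_on_cos[OF continuous_on_id]
    by (intro continuous_on_subset[OF continuous_on_mult_g] continuous_intros) auto
  qed (use assms g_pos cos_tangent_angle_pos in auto)
  moreover have "chord_coord s + integral {s..t} (\<lambda>x. g x * cos (tangent_angle x)) = chord_coord t"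
    unfolding chord_coord_def using assms continuous_on_cos[OF continuous_on_id]
    by (intro Henstock_Kurzweil_Integration.integral_combine integrable_g_tangent_angle) auto
  ultimately show ?thesis
    by simp
qed

lemma height_coord_right_end: "height_coord b = 0"
proof -
  define F where "F s = g s * sin (tangent_angle s)" for s
  have "integral {a..b} (\<lambda>s. F (a + b - s)) = integral {a..b} (\<lambda>s. - F s)"
    by (intro integral_cong) (simp add: F_def g_reflect tangent_angle_reflect)
  then have "integral {a..b} F = - integral {a..b} F"
    by (simp add: integral_reflect_interval integral_neg)
  then show ?thesis
    by (simp add: height_coord_def F_def[abs_def])
qed

lemma height_coord_eq_integral_right:
  "t \<in> {a..b} \<Longrightarrow> height_coord t = integral {t..b} (\<lambda>s. g s * sin (tangent_angle s))"
  using integral_g_tangent_angle_split[OF continuous_on_sin[OF continuous_on_id], of t]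
    height_coord_right_end
  unfolding height_coord_def by linarith

text \<open>The height increases while the tangent points upwards (\<open>tangent_angle \<le> 0\<close>),
  then decreases to \<open>0\<close>.\<close>

lemma height_coord_nonneg:
  assumes t: "t \<in> {a..b}"
  shows "0 \<le> height_coord t"
proof (cases "tangent_angle t \<le> 0")
  case True
  have "0 \<le> integral {a..t} (\<lambda>s. g s * (\<lambda>x. sin (- x)) (tangent_angle s))"
  proof (rule integral_g_tangent_angle_nonneg)
    fix s assume "s \<in> {a..t}"
    then have "- half_angle \<le> tangent_angle s" "tangent_angle s \<le> 0"
      using tangent_angle_bounds[of s] tangent_angle_mono[of s t] True t by auto
    then have "0 \<le> sin (- tangent_angle s)"
      using half_angle_lt by (intro sin_ge_zero) (auto simp: half_angle_def)
    then show "0 \<le> (\<lambda>x. sin (- x)) (tangent_angle s)"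
      by simp
  qed (use t in \<open>auto intro!: continuous_intros\<close>)
  then show ?thesis
    by (simp add: height_coord_def integral_neg)
next
  case False
  have "0 \<le> integral {t..b} (\<lambda>s. g s * sin (tangent_angle s))"
  proof (rule integral_g_tangent_angle_nonneg)
    fix s assume "s \<in> {t..b}"
    then have "0 \<le> tangent_angle s" "tangent_angle s \<le> half_angle"
      using tangent_angle_bounds[of s] tangent_angle_mono[of t s] False t by auto
    then show "0 \<le> sin (tangent_angle s)"
      using half_angle_lt by (auto simp: half_angle_def intro!: sin_ge_zero)
  qed (use t in \<open>auto intro!: continuous_intros\<close>)
  then show ?thesis
    using height_coord_eq_integral_right[OF t] by simp
qed

text \<open>The curve stays below the lines through its endpoints at angle \<open>T\<close> to the chord:
  the integrands are \<open>g sin (T + tangent_angle)\<close> and \<open>g sin (T - tangent_angle)\<close>.\<close>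

lemma height_coord_le_chord_coord:
  assumes t: "t \<in> {a..b}"
  shows "cos half_angle * height_coord t \<le> sin half_angle * chord_coord t"
proof -
  have "0 \<le> integral {a..t} (\<lambda>s. g s * sin (half_angle + tangent_angle s))"
  proof (rule integral_g_tangent_angle_nonneg)
    fix s assume "s \<in> {a..t}"
    then have "\<bar>tangent_angle s\<bar> \<le> half_angle"
      using tangent_angle_bounds t by auto
    then show "0 \<le> sin (half_angle + tangent_angle s)"
      using half_angle_lt by (intro sin_ge_zero) (auto simp: half_angle_def)
  qed (use t in \<open>auto intro!: continuous_intros\<close>)
  also have "\<dots> = sin half_angle * chord_coord t - cos half_angle * height_coord t"
    using integral_g_tangent_angle_lincomb[of a t "sin half_angle" "cos half_angle"] t
    by (simp add: chord_coord_def height_coord_def sin_add mult.commute)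
  finally show ?thesis
    by simp
qed

lemma height_coord_le_remaining_chord_coord:
  assumes t: "t \<in> {a..b}"
  shows "cos half_angle * height_coord t \<le> sin half_angle * (chord_coord b - chord_coord t)"
proof -
  have "0 \<le> integral {t..b} (\<lambda>s. g s * sin (half_angle - tangent_angle s))"
  proof (rule integral_g_tangent_angle_nonneg)
    fix s assume "s \<in> {t..b}"
    then have "\<bar>tangent_angle s\<bar> \<le> half_angle"
      using tangent_angle_bounds t by auto
    then show "0 \<le> sin (half_angle - tangent_angle s)"
      using half_angle_lt by (intro sin_ge_zero) (auto simp: half_angle_def)
  qed (use t in \<open>auto intro!: continuous_intros\<close>)
  also have "\<dots> = sin half_angle * (chord_coord b - chord_coord t) - cos half_angle * height_coord t"
    using integral_g_tangent_angle_lincomb[of t b "sin half_angle" "- cos half_angle"] t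
      integral_g_tangent_angle_split[OF continuous_on_cos[OF continuous_on_id] t]
    by (simp add: chord_coord_def height_coord_eq_integral_right sin_diff mult.commute)
  finally show ?thesis
    by simp
qed

lemma integral_curve_eq_coords:
  fixes \<alpha> :: "real \<Rightarrow> 'a::banach"
  assumes "\<forall>s\<in>{a..b}. \<alpha> s = cos (tangent_angle s) *\<^sub>R e - sin (tangent_angle s) *\<^sub>R \<nu>"
    and t: "t \<in> {a..b}"
  shows "integral {a..t} (\<lambda>s. g s *\<^sub>R \<alpha> s) = chord_coord t *\<^sub>R e + height_coord t *\<^sub>R \<nu>"
proof -
  have "(\<lambda>s. g s * cos (tangent_angle s)) integrable_on {a..t}"
    "(\<lambda>s. g s * sin (tangent_angle s)) integrable_on {a..t}"
    using t continuous_on_cos[OF continuous_on_id] continuous_on_sin[OF continuous_on_id]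
    by (auto intro: integrable_g_tangent_angle)
  then have "((\<lambda>s. (g s * cos (tangent_angle s)) *\<^sub>R e - (g s * sin (tangent_angle s)) *\<^sub>R \<nu>)
      has_integral chord_coord t *\<^sub>R e - (- height_coord t) *\<^sub>R \<nu>) {a..t}"
    unfolding chord_coord_def height_coord_def minus_minus
    by (intro has_integral_diff has_integral_scaleR_left integrable_integral)
  moreover have "integral {a..t} (\<lambda>s. g s *\<^sub>R \<alpha> s) =
      integral {a..t} (\<lambda>s. (g s * cos (tangent_angle s)) *\<^sub>R e - (g s * sin (tangent_angle s)) *\<^sub>R \<nu>)"
    using assms by (intro integral_cong) (simp add: scaleR_diff_right)
  ultimately show ?thesis
    by (simp add: integral_unique)
qed

lemma chord_coord_pos: "0 < chord_coord b"
  using chord_coord_strict_mono[of a b] ab by (simp add: chord_coord_def)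

lemma coords_in_triangle:
  assumes t: "t \<in> {a..b}" and "0 < H"
    and chord_bound: "chord_coord b * sin half_angle \<le> 2 * H * cos half_angle"
  shows "chord_coord t *\<^sub>R e + height_coord t *\<^sub>R \<nu> \<in>
    convex hull {0, chord_coord b *\<^sub>R e, (chord_coord b / 2) *\<^sub>R e + H *\<^sub>R \<nu>}"
proof (rule convex_hull_triangle_memI)
  txt \<open>The base angle \<open>arctan (2 H / chord_coord b)\<close> of the triangle is at least \<open>T\<close>.\<close>
  have side: "Q * chord_coord b \<le> 2 * H * P"
    if "cos half_angle * Q \<le> sin half_angle * P" "0 \<le> Q" for P Q
    using cross_mult_le_trans[OF sin_half_angle_pos that(2) _ that(1) chord_bound] \<open>0 < H\<close> by simp
  show "0 \<le> height_coord t"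
    by (rule height_coord_nonneg[OF t])
  then show "height_coord t * chord_coord b \<le> 2 * H * chord_coord t"
    "height_coord t * chord_coord b \<le> 2 * H * (chord_coord b - chord_coord t)"
    using side height_coord_le_chord_coord[OF t] height_coord_le_remaining_chord_coord[OF t]
    by simp_all
qed (use chord_coord_pos \<open>0 < H\<close> in auto)

lemma suspension_integral_curve:
  fixes \<alpha> :: "real \<Rightarrow> real^3" and e \<nu> :: "real^3"
  assumes \<alpha>_smooth: "smooth_on {a..b} \<alpha>"
    and \<alpha>_eq: "\<forall>s\<in>{a..b}. \<alpha> s = cos (tangent_angle s) *\<^sub>R e - sin (tangent_angle s) *\<^sub>R \<nu>"
    and "e \<bullet> e = 1" "\<nu> \<bullet> \<nu> = 1" "e \<bullet> \<nu> = 0" and "0 < H"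
    and chord_bound: "chord_coord b * sin half_angle \<le> 2 * H * cos half_angle"
  shows "suspension H a b (\<lambda>t. integral {a..t} (\<lambda>s. g s *\<^sub>R \<alpha> s))"
proof -
  define \<gamma> where "\<gamma> t = integral {a..t} (\<lambda>s. g s *\<^sub>R \<alpha> s)" for t
  define K where "K = chord_coord b"
  note \<gamma>_eq = integral_curve_eq_coords[OF \<alpha>_eq, folded \<gamma>_def]
  have \<gamma>a: "\<gamma> a = 0" and \<gamma>b: "\<gamma> b = K *\<^sub>R e"
    using \<gamma>_eq[of b] ab by (simp_all add: \<gamma>_def K_def height_coord_right_end)
  have "smooth_on {a..b} \<gamma>"
  proof (rule smooth_on_has_vector_derivativeI)
    show "smooth_on {a..b} (\<lambda>t. g t *\<^sub>R \<alpha> t)"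
      by (rule smooth_on_scaleR[OF g_smooth \<alpha>_smooth])
    then show "(\<gamma> has_vector_derivative g t *\<^sub>R \<alpha> t) (at t within {a..b})" if "t \<in> {a..b}" for t
      unfolding \<gamma>_def[abs_def] using that by (intro integral_has_vector_derivative smooth_on_imp_continuous_on)
  qed
  moreover have "inj_on \<gamma> {a..b}"
  proof (rule inj_on_imageI2[of "\<lambda>x. x \<bullet> e"], rule inj_onI)
    fix s t assume "s \<in> {a..b}" "t \<in> {a..b}" "((\<lambda>x. x \<bullet> e) \<circ> \<gamma>) s = ((\<lambda>x. x \<bullet> e) \<circ> \<gamma>) t"
    then have "chord_coord s = chord_coord t"
      using \<gamma>_eq assms(3,5) by (simp add: inner_add_left inner_commute[of \<nu> e])
    then show "s = t"
      using chord_coord_strict_mono \<open>s \<in> {a..b}\<close> \<open>t \<in> {a..b}\<close> by (metis less_irrefl linorder_cases)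
  qed
  moreover have "isosceles_triangle (\<gamma> a) (\<gamma> b) H (convex hull {0, K *\<^sub>R e, (K / 2) *\<^sub>R e + H *\<^sub>R \<nu>})"
    unfolding \<gamma>a \<gamma>b using assms(4-6) by (intro isosceles_triangle_over_chord) (auto simp: norm_eq_sqrt_inner)
  moreover have "\<gamma> t \<in> convex hull {0, K *\<^sub>R e, (K / 2) *\<^sub>R e + H *\<^sub>R \<nu>}" if "t \<in> {a..b}" for t
    unfolding \<gamma>_eq[OF that] K_def using that \<open>0 < H\<close> chord_bound by (rule coords_in_triangle)
  ultimately show ?thesis
    unfolding suspension_def \<gamma>_def[symmetric]
    by (intro conjI exI[of _ "convex hull {0, K *\<^sub>R e, (K / 2) *\<^sub>R e + H *\<^sub>R \<nu>}"]) auto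
qed

end

lemma circular_arc_rescaled_suspension:
  fixes \<alpha> :: "real \<Rightarrow> real^3" and u v :: "real^3"
  assumes ab: "a < b" and "0 < c" "0 < r"
    and uu: "u \<bullet> u = 1" and vv: "v \<bullet> v = 1" and uv: "u \<bullet> v = 0"
    and "smooth_on {a..b} \<alpha>"
    and \<alpha>_eq: "\<forall>t\<in>{a..b}. \<alpha> t = cos (c / r * (t - a)) *\<^sub>R u + sin (c / r * (t - a)) *\<^sub>R v"
    and angle: "c / r * (b - a) / 2 < pi / 2" and "0 < eps"
    and height: "r * (sin (c / r * (b - a) / 2))\<^sup>2 \<le> eps * cos (c / r * (b - a) / 2)"
    and "1 / 2 \<le> k"
  obtains g where "smooth_on {a..b} g" "\<And>t. 0 < g t"
    "\<And>t. t \<le> a + (b - a) / 8 \<or> b - (b - a) / 8 \<le> t \<Longrightarrow> g t = c"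
    "suspension (k * eps) a b (\<lambda>t. integral {a..t} (\<lambda>s. g s *\<^sub>R \<alpha> s))"
    "integral {a..b} (\<lambda>s. g s *\<^sub>R \<alpha> s) =
       k *\<^sub>R (r *\<^sub>R (sin (c / r * (b - a)) *\<^sub>R u + (1 - cos (c / r * (b - a))) *\<^sub>R v))"
proof -
  interpret circular_arc_angle a b "c / r"
    using ab angle \<open>0 < c\<close> \<open>0 < r\<close> by unfold_locales auto
  obtain g where g: "smooth_on {a..b} g" "\<And>s. 0 < g s" "\<And>s. g (a + b - s) = g s"
    "\<And>t. t \<le> a + (b - a) / 8 \<or> b - (b - a) / 8 \<le> t \<Longrightarrow> g t = c"
    and chord: "integral {a..b} (\<lambda>s. g s * cos (tangent_angle s)) =
      k * integral {a..b} (\<lambda>s. c * cos (tangent_angle s))"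
    using symmetric_speed_exists[OF \<open>0 < c\<close> \<open>1 / 2 \<le> k\<close>] by blast
  interpret symmetric_speed a b "c / r" g
    using g by unfold_locales auto
  define T where "T = half_angle"
  define e where "e = cos T *\<^sub>R u + sin T *\<^sub>R v"
  define \<nu> where "\<nu> = sin T *\<^sub>R u + (- cos T) *\<^sub>R v"
  have "e \<bullet> e = 1" "\<nu> \<bullet> \<nu> = 1" "e \<bullet> \<nu> = 0"
    unfolding e_def \<nu>_def by (rule orthonormal_rotated_frame[OF uu vv uv])+
  have \<alpha>_frame: "\<forall>s\<in>{a..b}. \<alpha> s = cos (tangent_angle s) *\<^sub>R e - sin (tangent_angle s) *\<^sub>R \<nu>"
    unfolding e_def \<nu>_def T_def using \<alpha>_eq arc_direction_in_chord_frame by auto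
  have chord_b: "chord_coord b = k * (2 * r * sin T)"
    using chord \<open>0 < r\<close> \<open>0 < c\<close> integral_cos_tangent_angle_full
    by (simp add: chord_coord_def T_def integral_mult_right)
  show ?thesis
  proof (rule that[OF g(1,2,4)])
    have "chord_coord b * sin T \<le> 2 * (k * eps) * cos T"
      using mult_left_mono[OF height, of "2 * k"] \<open>1 / 2 \<le> k\<close>
      by (simp add: chord_b T_def half_angle_def power2_eq_square algebra_simps)
    then show "suspension (k * eps) a b (\<lambda>t. integral {a..t} (\<lambda>s. g s *\<^sub>R \<alpha> s))"
      using \<open>0 < eps\<close> \<open>1 / 2 \<le> k\<close>
      by (intro suspension_integral_curve[OF \<open>smooth_on {a..b} \<alpha>\<close> \<alpha>_frame] \<open>e \<bullet> e = 1\<close>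
          \<open>\<nu> \<bullet> \<nu> = 1\<close> \<open>e \<bullet> \<nu> = 0\<close>) (auto simp: T_def)
    have "integral {a..b} (\<lambda>s. g s *\<^sub>R \<alpha> s) = k *\<^sub>R ((2 * r * sin T) *\<^sub>R e)"
      using integral_curve_eq_coords[OF \<alpha>_frame, of b] ab
      by (simp add: chord_b height_coord_right_end)
    also have "(2 * r * sin T) *\<^sub>R e = r *\<^sub>R (sin (c / r * (b - a)) *\<^sub>R u + (1 - cos (c / r * (b - a))) *\<^sub>R v)"
      using circle_chord_half_angle[of r T u v] by (simp add: e_def T_def half_angle_def)
    finally show "integral {a..b} (\<lambda>s. g s *\<^sub>R \<alpha> s) =
       k *\<^sub>R (r *\<^sub>R (sin (c / r * (b - a)) *\<^sub>R u + (1 - cos (c / r * (b - a))) *\<^sub>R v))" .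
  qed
qed

theorem lemma6:
  fixes a b eps :: real and \<alpha> :: "real \<Rightarrow> real^3" and f :: "real \<Rightarrow> real"
  assumes "a < b"
    and "smooth_on {a..b} \<alpha>" and "\<forall>t\<in>{a..b}. \<alpha> t \<in> sphere 0 1"
    and "smooth_on {a..b} f" and "\<forall>t\<in>{a..b}. f t > 0"
    and "round_suspension eps a b (\<lambda>t. integral {a..t} (\<lambda>s. f s *\<^sub>R \<alpha> s))"
  shows "\<forall>k\<in>{1/2..3/2}. \<exists>g :: real \<Rightarrow> real.
           smooth_on {a..b} g \<and> (\<forall>t\<in>{a..b}. g t > 0) \<and>
           (\<exists>\<delta>>0. \<forall>t\<in>{a..b}. (t < a + \<delta> \<or> t > b - \<delta>) \<longrightarrow> g t = f t) \<and>
           suspension (k * eps) a b (\<lambda>t. integral {a..t} (\<lambda>s. g s *\<^sub>R \<alpha> s)) \<and>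
           integral {a..b} (\<lambda>s. g s *\<^sub>R \<alpha> s) - integral {a..a} (\<lambda>s. g s *\<^sub>R \<alpha> s)
             = k *\<^sub>R (integral {a..b} (\<lambda>s. f s *\<^sub>R \<alpha> s) - integral {a..a} (\<lambda>s. f s *\<^sub>R \<alpha> s))"
proof
  fix k :: real assume k: "k \<in> {1/2..3/2}"
  obtain c r u v where arc: "0 < c" "0 < r" "u \<bullet> u = 1" "v \<bullet> v = 1" "u \<bullet> v = 0"
    "\<forall>t\<in>{a..b}. f t = c"
    "\<forall>t\<in>{a..b}. \<alpha> t = cos (c / r * (t - a)) *\<^sub>R u + sin (c / r * (t - a)) *\<^sub>R v"
    "\<forall>t\<in>{a..b}. integral {a..t} (\<lambda>s. f s *\<^sub>R \<alpha> s) =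
       r *\<^sub>R (sin (c / r * (t - a)) *\<^sub>R u + (1 - cos (c / r * (t - a))) *\<^sub>R v)"
    by (rule round_suspension_circular_arc[OF assms])
  have "0 < c / r"
    using arc by simp
  note height = circular_arc_suspension_height[OF \<open>a < b\<close> \<open>0 < r\<close> this arc(3-5,8)
      assms(6)[unfolded round_suspension_def, THEN conjunct1]]
  obtain g where g: "smooth_on {a..b} g" "\<And>t. 0 < g t"
    "\<And>t. t \<le> a + (b - a) / 8 \<or> b - (b - a) / 8 \<le> t \<Longrightarrow> g t = c"
    "suspension (k * eps) a b (\<lambda>t. integral {a..t} (\<lambda>s. g s *\<^sub>R \<alpha> s))"
    "integral {a..b} (\<lambda>s. g s *\<^sub>R \<alpha> s) =
       k *\<^sub>R (r *\<^sub>R (sin (c / r * (b - a)) *\<^sub>R u + (1 - cos (c / r * (b - a))) *\<^sub>R v))"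
    using circular_arc_rescaled_suspension[OF \<open>a < b\<close> arc(1-5) assms(2) arc(7) height] k by auto
  show "\<exists>g. smooth_on {a..b} g \<and> (\<forall>t\<in>{a..b}. g t > 0) \<and>
      (\<exists>\<delta>>0. \<forall>t\<in>{a..b}. (t < a + \<delta> \<or> t > b - \<delta>) \<longrightarrow> g t = f t) \<and>
      suspension (k * eps) a b (\<lambda>t. integral {a..t} (\<lambda>s. g s *\<^sub>R \<alpha> s)) \<and>
      integral {a..b} (\<lambda>s. g s *\<^sub>R \<alpha> s) - integral {a..a} (\<lambda>s. g s *\<^sub>R \<alpha> s)
        = k *\<^sub>R (integral {a..b} (\<lambda>s. f s *\<^sub>R \<alpha> s) - integral {a..a} (\<lambda>s. f s *\<^sub>R \<alpha> s))"
    using g arc(6,8) \<open>a < b\<close>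
    by (intro exI[of _ g] conjI exI[of _ "(b - a) / 8"]) auto
qed

end
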